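(* Let $\lambda=0$ and $u_0$ smooth and $1$-periodic, and consider $u_{xt}+uu_{xx}=-\int_0^1u_x^2\,dx$, $u(x,0)=u_0$, with periodic boundary conditions. Then along characteristics, for all $t\ge0$, $$\gamma_\alpha(\alpha,t)=\frac{e^{tu_0'(\alpha)}}{\int_0^1e^{tu_0'(\beta)}d\beta},\qquad u_x(\gamma(\alpha,t),t)=u_0'(\alpha)-\frac{\int_0^1u_0'(\beta)e^{tu_0'(\beta)}d\beta}{\int_0^1e^{tu_0'(\beta)}d\beta},$$ and $0\le u_0'(\alpha)-u_x(\gamma(\alpha,t),t)\le\int_0^1u_0'(\beta)e^{tu_0'(\beta)}d\beta$; in particular the solution exists globally in time.
   Context: $\gamma$ is the characteristic: $\dot\gamma(\alpha,t)=u(\gamma(\alpha,t),t)$, $\gamma(\alpha,0)=\alpha$, and $\gamma_\alpha=\partial_\alpha\gamma$. *)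

theory Defs
  imports "HOL-Analysis.Analysis"
begin

definition pdx :: "(real \<Rightarrow> real \<Rightarrow> real) \<Rightarrow> real \<Rightarrow> real \<Rightarrow> real" where
  "pdx f x t = deriv (\<lambda>y. f y t) x"

definition pdt :: "real \<Rightarrow> (real \<Rightarrow> real \<Rightarrow> real) \<Rightarrow> real \<Rightarrow> real \<Rightarrow> real" where
  "pdt T f x t = vector_derivative (\<lambda>s. f x s) (at t within {0..<T})"

text \<open>Iterated partial derivative: True = d/dx, False = d/dt; the head is applied last.\<close>
fun pd :: "real \<Rightarrow> bool list \<Rightarrow> (real \<Rightarrow> real \<Rightarrow> real) \<Rightarrow> real \<Rightarrow> real \<Rightarrow> real" where
  "pd T [] f = f"
| "pd T (True # ds) f = pdx (pd T ds f)"
| "pd T (False # ds) f = pdt T (pd T ds f)"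

definition smooth_on_strip :: "real \<Rightarrow> (real \<Rightarrow> real \<Rightarrow> real) \<Rightarrow> bool" where
  "smooth_on_strip T u \<longleftrightarrow>
     (\<forall>ds. (\<forall>x t. 0 \<le> t \<and> t < T \<longrightarrow>
              (\<lambda>y. pd T ds u y t) differentiable (at x) \<and>
              (\<lambda>s. pd T ds u x s) differentiable (at t within {0..<T})) \<and>
           continuous_on (UNIV \<times> {0..<T}) (\<lambda>p. pd T ds u (fst p) (snd p)))"

definition smooth1 :: "(real \<Rightarrow> real) \<Rightarrow> bool" where
  "smooth1 f \<longleftrightarrow> (\<forall>n x. ((deriv ^^ n) f) differentiable (at x))"

definition is_solution :: "(real \<Rightarrow> real) \<Rightarrow> real \<Rightarrow> (real \<Rightarrow> real \<Rightarrow> real) \<Rightarrow> bool" where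
  "is_solution u0 T u \<longleftrightarrow>
     smooth_on_strip T u \<and>
     (\<forall>x. u x 0 = u0 x) \<and>
     (\<forall>x t. 0 \<le> t \<and> t < T \<longrightarrow> u (x + 1) t = u x t) \<and>
     (\<forall>x t. 0 \<le> t \<and> t < T \<longrightarrow>
        pd T [False, True] u x t + u x t * pd T [True, True] u x t
          = - integral {0..1} (\<lambda>y. (pd T [True] u y t)\<^sup>2))"

definition is_characteristic :: "real \<Rightarrow> (real \<Rightarrow> real \<Rightarrow> real) \<Rightarrow> (real \<Rightarrow> real \<Rightarrow> real) \<Rightarrow> bool" where
  "is_characteristic T u \<gamma> \<longleftrightarrow>
     (\<forall>a. \<gamma> a 0 = a) \<and>
     (\<forall>a t. 0 \<le> t \<and> t < T \<longrightarrow>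
        ((\<lambda>s. \<gamma> a s) has_real_derivative u (\<gamma> a t) t) (at t within {0..<T}))"

end

theory Submission
  imports Defs
begin

text \<open>
  Along a characteristic, \<open>w(\<alpha>,t) = u\<^sub>x(\<gamma>(\<alpha>,t),t)\<close> satisfies
  \<open>\<partial>\<^sub>t w = u\<^sub>x\<^sub>t + u u\<^sub>x\<^sub>x = -\<integral>\<^sub>0\<^sup>1 u\<^sub>x\<^sup>2\<close>, which does not depend on \<open>\<alpha>\<close>; hence
  \<open>u\<^sub>x(\<gamma>(\<alpha>,t),t) = u\<^sub>0'(\<alpha>) - \<rho>(t)\<close> for a single function \<open>\<rho>\<close>.  Differentiating the
  characteristic equation in \<open>\<alpha>\<close> gives \<open>\<partial>\<^sub>t \<gamma>\<^sub>\<alpha> = u\<^sub>x \<gamma>\<^sub>\<alpha>\<close>, so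
  \<open>\<gamma>\<^sub>\<alpha> = exp (t u\<^sub>0'(\<alpha>) - \<integral>\<^sub>0\<^sup>t \<rho>)\<close>.  Periodicity gives \<open>\<gamma>(\<alpha>+1,t) = \<gamma>(\<alpha>,t) + 1\<close>, hence
  \<open>\<integral>\<^sub>0\<^sup>1 \<gamma>\<^sub>\<alpha> = 1\<close>, i.e. \<open>exp (\<integral>\<^sub>0\<^sup>t \<rho>) = Z(t) = \<integral>\<^sub>0\<^sup>1 exp (t u\<^sub>0')\<close> and \<open>\<rho> = Z'/Z\<close>.
  The bounds follow from \<open>Z \<ge> 1\<close> (as \<open>exp y \<ge> 1 + y\<close> and \<open>\<integral>\<^sub>0\<^sup>1 u\<^sub>0' = 0\<close>) and \<open>Z' \<ge> 0\<close>
  for \<open>t \<ge> 0\<close>.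

  Conversely, the formula for \<open>\<gamma>\<^sub>\<alpha>\<close> integrates to an explicit map \<open>\<Gamma>(\<alpha>,t)\<close> which is, for
  every \<open>t\<close>, an increasing bijection of the line with \<open>\<Gamma>(\<alpha>+1,t) = \<Gamma>(\<alpha>,t) + 1\<close>; the
  velocity \<open>u(x,t) = \<partial>\<^sub>t\<Gamma>(\<Gamma>\<^sup>-\<^sup>1(x,t),t)\<close> is a global solution.  It is smooth because every
  partial derivative of \<open>u\<close> is some \<open>G(\<Gamma>\<^sup>-\<^sup>1(x,t),t)\<close> with \<open>G\<close> in an explicit algebra of
  functions of \<open>(\<alpha>,t)\<close> that is closed under \<open>\<partial>\<^sub>\<alpha>\<close> and \<open>\<partial>\<^sub>t\<close>.
\<close>

section \<open>Real analysis on the line and the plane\<close>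

lemma MVT_within_distance:
  fixes f f' :: "real \<Rightarrow> real"
  assumes "\<And>y. (f has_real_derivative f' y) (at y)"
  shows "\<exists>\<xi>. \<bar>\<xi> - a\<bar> \<le> \<bar>b - a\<bar> \<and> f b - f a = (b - a) * f' \<xi>"
proof (cases a b rule: linorder_cases)
  case less
  from MVT2[OF less, of f f'] assms obtain z where "a < z" "z < b" "f b - f a = (b - a) * f' z"
    by blast
  then show ?thesis by (intro exI[of _ z]) auto
next
  case equal then show ?thesis by auto
next
  case greater
  from MVT2[OF greater, of f f'] assms obtain z where "b < z" "z < a" "f a - f b = (a - b) * f' z"
    by blast
  then show ?thesis by (intro exI[of _ z]) (auto simp: algebra_simps)
qed

lemma has_derivative_of_partials:
  fixes f fx :: "real \<Rightarrow> real \<Rightarrow> real"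
  assumes dx: "\<And>y s. s \<in> S \<Longrightarrow> ((\<lambda>y. f y s) has_real_derivative fx y s) (at y)"
    and cont: "continuous_on (UNIV \<times> S) (\<lambda>p. fx (fst p) (snd p))"
    and dt: "((\<lambda>s. f x s) has_real_derivative ft) (at t within S)"
    and t: "t \<in> S"
  shows "((\<lambda>p. f (fst p) (snd p)) has_derivative (\<lambda>p. fx x t * fst p + ft * snd p))
           (at (x,t) within UNIV \<times> S)"
proof -
  let ?swap = "\<lambda>p :: real \<times> real. (snd p, fst p)"
  have img: "?swap ` (S \<times> UNIV) = UNIV \<times> S" "?swap ` (UNIV \<times> S) = S \<times> UNIV" by force+
  have "continuous (at (x, t) within UNIV \<times> S) (\<lambda>p. fx (fst p) (snd p))"
    using cont t by (simp add: continuous_on_eq_continuous_within)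
  then have "continuous (at (t, x) within S \<times> UNIV) ((\<lambda>p. fx (fst p) (snd p)) \<circ> ?swap)"
    by (intro continuous_within_compose) (auto intro!: continuous_intros simp: img)
  then have "continuous (at (t, x) within S \<times> UNIV) (\<lambda>p. blinfun_mult_right (fx (snd p) (fst p)))"
    by (intro bounded_linear.continuous[OF bounded_linear_blinfun_mult_right]) (simp add: o_def)
  then have "((\<lambda>(s, y). f y s) has_derivative (\<lambda>(hs, hy). ft * hs + blinfun_mult_right (fx x t) hy))
      (at (t, x) within S \<times> UNIV)"
    using dt dx t unfolding has_field_derivative_def
    by (intro has_derivative_partialsI) (auto simp: o_def split_beta')
  then have "((\<lambda>(s, y). f y s) \<circ> ?swap has_derivative (\<lambda>(hs, hy). ft * hs + fx x t * hy) \<circ> ?swap)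
      (at (x, t) within UNIV \<times> S)"
    by (intro diff_chain_within) (auto intro!: derivative_intros simp: img split_beta')
  then show ?thesis by (simp add: o_def split_beta' add.commute)
qed

lemma DERIV_within_nonpos_imp_nonincreasing:
  fixes z z' :: "real \<Rightarrow> real"
  assumes d: "\<And>s. s \<in> {a..b} \<Longrightarrow> (z has_real_derivative z' s) (at s within {a..b})"
    and n: "\<And>s. s \<in> {a..b} \<Longrightarrow> z' s \<le> 0"
    and t: "a \<le> t" "t \<le> b"
  shows "z t \<le> z a"
proof (cases "a = t")
  case True then show ?thesis by simp
next
  case False
  then have at: "a < t" using t by simp
  have "continuous_on {a..b} z"
    using d by (meson DERIV_continuous continuous_on_eq_continuous_within)
  then have c: "continuous_on {a..t} z" by (rule continuous_on_subset) (use t in auto)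
  have dd: "(z has_real_derivative z' x) (at x)" if "a < x" "x < t" for x
  proof -
    have "at x within {a..b} = at x" using that t by (intro at_within_interior) auto
    then show ?thesis using d[of x] that t by auto
  qed
  from MVT[OF at c] dd obtain l \<xi> where xi: "a < \<xi>" "\<xi> < t" "DERIV z \<xi> :> l" "z t - z a = (t - a) * l"
    by (meson real_differentiable_def)
  have "l \<le> 0" using DERIV_unique[OF xi(3) dd[OF xi(1,2)]] n[of \<xi>] xi t by auto
  then show ?thesis using xi(4) at mult_nonneg_nonpos[of "t - a" l] by simp
qed

text \<open>Gronwall's inequality for \<open>\<bar>e'\<bar> \<le> M \<bar>e\<bar> + c\<close>, via the decreasing quantity
  \<open>(e\<^sup>2 + c\<^sup>2) exp (-(2M+1)s)\<close>.\<close>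

lemma gronwall_squared:
  fixes e e' :: "real \<Rightarrow> real"
  assumes t: "t \<in> {0..t1}" and M: "0 \<le> M" and c: "0 \<le> c"
    and d: "\<And>s. s \<in> {0..t1} \<Longrightarrow> (e has_real_derivative e' s) (at s within {0..t1})"
    and b: "\<And>s. s \<in> {0..t1} \<Longrightarrow> \<bar>e' s\<bar> \<le> M * \<bar>e s\<bar> + c"
  shows "(e t)^2 \<le> ((e 0)^2 + c^2) * exp ((2*M+1) * t)"
proof -
  define L where "L = 2*M+1"
  define z where "z s = ((e s)^2 + c^2) * exp (-(L * s))" for s
  define z' where "z' s = (2 * e s * e' s - L * ((e s)^2 + c^2)) * exp (-(L * s))" for s
  have dz: "(z has_real_derivative z' s) (at s within {0..t1})" if "s \<in> {0..t1}" for s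
    unfolding z_def z'_def
    by (auto intro!: derivative_eq_intros d[OF that] simp: algebra_simps)
  have nz: "z' s \<le> 0" if "s \<in> {0..t1}" for s
  proof -
    have "2 * e s * e' s \<le> 2 * \<bar>e s\<bar> * \<bar>e' s\<bar>" by (simp add: abs_mult[symmetric])
    also have "\<dots> \<le> 2 * \<bar>e s\<bar> * (M * \<bar>e s\<bar> + c)" using b[OF that] by (intro mult_left_mono) auto
    also have "\<dots> = 2 * M * (e s)^2 + 2 * \<bar>e s\<bar> * c"
      by (simp add: algebra_simps power2_eq_square)
    also have "\<dots> \<le> L * ((e s)^2 + c^2)"
    proof -
      have "2 * \<bar>e s\<bar> * c \<le> (e s)^2 + c^2"
        using sum_squares_bound[of "\<bar>e s\<bar>" c] by (simp add: power2_abs)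
      moreover have "0 \<le> M * c^2" using M by simp
      ultimately show ?thesis by (simp add: L_def algebra_simps)
    qed
    finally show ?thesis unfolding z'_def by (simp add: mult_nonpos_nonneg)
  qed
  have "z t \<le> z 0" using DERIV_within_nonpos_imp_nonincreasing[of 0 t1 z z' t] dz nz t by auto
  then have "((e t)^2 + c^2) \<le> ((e 0)^2 + c^2) * exp (L * t)"
    by (simp add: z_def exp_minus field_simps)
  then show ?thesis unfolding L_def using zero_le_power2[of c] by linarith
qed

lemma periodic_of_int:
  fixes g :: "real \<Rightarrow> 'a"
  assumes per: "\<And>x. g (x+1) = g x"
  shows "g (x + of_int n) = g x"
proof -
  have p: "g (y + real k) = g y" for y k
  proof (induction k)
    case (Suc k)
    have eq: "y + real (Suc k) = (y + real k) + 1" by simp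
    show ?case using Suc per[of "y + real k"] by (simp only: eq)
  qed simp
  show ?thesis
  proof (cases "n \<ge> 0")
    case True then show ?thesis using p[of x "nat n"] by simp
  next
    case False
    have "g (x + of_int n + real (nat (-n))) = g (x + of_int n)" by (rule p)
    then show ?thesis using False by simp
  qed
qed

lemma periodic_reduce_frac:
  fixes g :: "real \<Rightarrow> 'a"
  assumes "\<And>x. g (x+1) = g x"
  shows "g x = g (x - of_int \<lfloor>x\<rfloor>)" and "x - of_int \<lfloor>x\<rfloor> \<in> {0..1}"
proof -
  show "g x = g (x - of_int \<lfloor>x\<rfloor>)"
    using periodic_of_int[of g "x - of_int \<lfloor>x\<rfloor>" "\<lfloor>x\<rfloor>", OF assms] by simp
  show "x - of_int \<lfloor>x\<rfloor> \<in> {0..1}"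
    using frac_lt_1[of x] of_int_floor_le[of x] unfolding frac_def atLeastAtMost_iff by linarith
qed

lemma periodic_bounded_on_strip:
  fixes g :: "real \<Rightarrow> real \<Rightarrow> real"
  assumes cont: "continuous_on (UNIV \<times> {0..t1}) (\<lambda>p. g (fst p) (snd p))"
    and per: "\<And>x s. s \<in> {0..t1} \<Longrightarrow> g (x+1) s = g x s"
  shows "\<exists>B. \<forall>x. \<forall>s\<in>{0..t1}. \<bar>g x s\<bar> \<le> B"
proof -
  have "compact ((\<lambda>p. g (fst p) (snd p)) ` ({0..1} \<times> {0..t1}))"
    by (intro compact_continuous_image compact_Times compact_Icc continuous_on_subset[OF cont]) auto
  then obtain B where B: "\<And>p. p \<in> {0..1} \<times> {0..t1} \<Longrightarrow> \<bar>g (fst p) (snd p)\<bar> \<le> B"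
    by (metis (no_types, lifting) bounded_iff compact_imp_bounded image_eqI real_norm_def)
  have "\<bar>g x s\<bar> \<le> B" if s: "s \<in> {0..t1}" for x s
    using periodic_reduce_frac[of "\<lambda>x. g x s" x] per[OF s] B[of "(x - of_int \<lfloor>x\<rfloor>, s)"] s by auto
  then show ?thesis by blast
qed

lemma periodic_uniformly_continuous_on_strip:
  fixes g :: "real \<Rightarrow> real \<Rightarrow> real"
  assumes cont: "continuous_on (UNIV \<times> {0..t1}) (\<lambda>p. g (fst p) (snd p))"
    and per: "\<And>x s. s \<in> {0..t1} \<Longrightarrow> g (x+1) s = g x s"
    and e: "e > 0"
  shows "\<exists>d>0. \<forall>x y s s'. s \<in> {0..t1} \<longrightarrow> s' \<in> {0..t1} \<longrightarrow>
             \<bar>x - y\<bar> < d \<longrightarrow> \<bar>s - s'\<bar> < d \<longrightarrow> \<bar>g x s - g y s'\<bar> < e"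
proof -
  have "uniformly_continuous_on ({-1..2} \<times> {0..t1}) (\<lambda>p. g (fst p) (snd p))"
    by (intro compact_uniformly_continuous compact_Times compact_Icc continuous_on_subset[OF cont]) auto
  then obtain d where d: "d > 0" and hd: "\<And>p q. p \<in> {-1..2} \<times> {0..t1} \<Longrightarrow> q \<in> {-1..2} \<times> {0..t1} \<Longrightarrow>
      dist q p < d \<Longrightarrow> dist (g (fst q) (snd q)) (g (fst p) (snd p)) < e"
    unfolding uniformly_continuous_on_def using e by metis
  show ?thesis
  proof (intro exI[of _ "min (d/2) (1/2)"] conjI allI impI)
    show "min (d/2) (1/2) > 0" using d by simp
    fix x y s s' assume s: "s \<in> {0..t1}" and s': "s' \<in> {0..t1}"
      and xy: "\<bar>x - y\<bar> < min (d/2) (1/2)" and ss: "\<bar>s - s'\<bar> < min (d/2) (1/2)"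
    text \<open>Translate both points by the same integer, so that they land in \<open>[-1,2]\<close>.\<close>
    define x0 where "x0 = x - of_int \<lfloor>x\<rfloor>"
    define y0 where "y0 = y - of_int \<lfloor>x\<rfloor>"
    have x0: "x0 \<in> {0..1}" unfolding x0_def by (rule periodic_reduce_frac(2)) simp
    then have y0: "y0 \<in> {-1..2}" using xy unfolding x0_def y0_def atLeastAtMost_iff abs_less_iff by linarith
    have gx: "g x s = g x0 s" unfolding x0_def using periodic_reduce_frac(1)[of "\<lambda>x. g x s"] per[OF s] by blast
    have gy: "g y s' = g y0 s'"
      using periodic_of_int[of "\<lambda>x. g x s'" "y - of_int \<lfloor>x\<rfloor>" "\<lfloor>x\<rfloor>"] per[OF s'] unfolding y0_def by simp
    have "(y0 - x0)^2 + (s' - s)^2 < (d/2)^2 + (d/2)^2"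
      using xy ss d unfolding x0_def y0_def
      by (intro add_strict_mono; subst power2_abs[symmetric]; intro power_strict_mono) (auto simp: abs_minus_commute)
    also have "\<dots> \<le> d^2" by (simp add: power_divide)
    finally have "dist (y0, s') (x0, s) < d"
      using d by (simp add: dist_Pair_Pair dist_real_def real_sqrt_less_iff power2_abs)
        (metis real_sqrt_less_mono real_sqrt_abs abs_of_pos d)
    then have "dist (g y0 s') (g x0 s) < e" using hd[of "(x0,s)" "(y0,s')"] x0 y0 s s' by auto
    then show "\<bar>g x s - g y s'\<bar> < e" using gx gy by (simp add: dist_real_def abs_minus_commute)
  qed
qed

lemma deriv_periodic:
  fixes f :: "real \<Rightarrow> real"
  assumes per: "\<And>y. f (y+1) = f y" and d: "f differentiable at (x+1)"
  shows "deriv f (x+1) = deriv f x"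
proof -
  have "((\<lambda>y. f (y+1)) has_real_derivative deriv f (x+1)) (at x)"
    using d DERIV_deriv_iff_real_differentiable DERIV_shift by blast
  then show ?thesis using per by (simp add: DERIV_imp_deriv)
qed

text \<open>\<open>integral_between a b f\<close> is the oriented integral \<open>\<integral>\<^sub>a\<^sup>b f\<close>, also for \<open>b < a\<close>.\<close>

definition primitive :: "(real \<Rightarrow> real) \<Rightarrow> real \<Rightarrow> real" where
  "primitive f x = (if 0 \<le> x then integral {0..x} f else - integral {x..0} f)"

definition integral_between :: "real \<Rightarrow> real \<Rightarrow> (real \<Rightarrow> real) \<Rightarrow> real" where
  "integral_between a b f = primitive f b - primitive f a"

lemma primitive_diff:
  fixes f :: "real \<Rightarrow> real"
  assumes f: "continuous_on UNIV f" and cy: "c \<le> y"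
  shows "primitive f y - primitive f c = integral {c..y} f"
proof -
  have comb: "integral {x..y} f + integral {y..z} f = integral {x..z} f" if "x \<le> y" "y \<le> z" for x y z
    using that by (intro Henstock_Kurzweil_Integration.integral_combine)
      (auto intro!: integrable_continuous_interval continuous_on_subset[OF f])
  consider "0 \<le> c" | "c < 0" "0 \<le> y" | "y < 0" using cy by linarith
  then show ?thesis
  proof cases
    case 1 then show ?thesis using comb[of 0 c y] cy by (simp add: primitive_def)
  next
    case 2 then show ?thesis using comb[of c 0 y] by (simp add: primitive_def)
  next
    case 3 then show ?thesis using comb[of c y 0] cy by (simp add: primitive_def)
  qed
qed

lemma primitive_has_derivative:
  fixes f :: "real \<Rightarrow> real"
  assumes f: "continuous_on UNIV f"
  shows "(primitive f has_real_derivative f x) (at x)"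
proof -
  have "((\<lambda>y. integral {x-1..y} f) has_real_derivative f x) (at x within {x-1..x+1})"
    unfolding has_real_derivative_iff_has_vector_derivative
    by (rule integral_has_vector_derivative) (auto intro: continuous_on_subset[OF f])
  moreover have "at x within {x-1..x+1} = at x" by (intro at_within_interior) auto
  ultimately have "((\<lambda>y. primitive f (x-1) + integral {x-1..y} f) has_real_derivative f x) (at x)"
    by (auto intro!: derivative_eq_intros)
  then show ?thesis
  proof (rule has_field_derivative_transform_within_open[of _ _ _ "{x-1<..}"])
    fix y :: real assume "y \<in> {x-1<..}"
    then show "primitive f (x - 1) + integral {x - 1..y} f = primitive f y"
      using primitive_diff[OF f, of "x-1" y] by simp
  qed auto
qed

lemma integral_between_has_derivative:
  "continuous_on UNIV f \<Longrightarrow> ((\<lambda>b. integral_between a b f) has_real_derivative f x) (at x)"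
  unfolding integral_between_def by (auto intro!: derivative_eq_intros primitive_has_derivative)

lemma integral_between_add: "integral_between a b f + integral_between b c f = integral_between a c f"
  unfolding integral_between_def by simp

lemma integral_between_FTC:
  fixes F f :: "real \<Rightarrow> real"
  assumes f: "continuous_on UNIV f" and F: "\<And>x. (F has_real_derivative f x) (at x)"
  shows "integral_between a b f = F b - F a"
proof -
  have "\<forall>x. ((\<lambda>x. primitive f x - F x) has_real_derivative 0) (at x)"
    using primitive_has_derivative[OF f] F by (auto intro!: derivative_eq_intros)
  then have "primitive f b - F b = primitive f a - F a"
    using DERIV_isconst_all by blast
  then show ?thesis unfolding integral_between_def by simp
qed

lemma integral_between_periodic:
  fixes f :: "real \<Rightarrow> real"
  assumes f: "continuous_on UNIV f" and per: "\<And>x. f (x+1) = f x"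
  shows "integral_between a (a+1) f = integral {0..1} f"
proof -
  have "((\<lambda>x. primitive f (x+1) - primitive f x) has_real_derivative 0) (at x)" for x
  proof -
    have "((\<lambda>x. primitive f (x+1) - primitive f x) has_real_derivative f (x+1) * 1 - f x) (at x)"
      by (auto intro!: derivative_eq_intros DERIV_chain2[OF primitive_has_derivative[OF f]]
                       primitive_has_derivative[OF f])
    then show ?thesis using per by simp
  qed
  then have "primitive f (a+1) - primitive f a = primitive f (0+1) - primitive f 0"
    using DERIV_isconst_all by blast
  also have "\<dots> = integral {0..1} f" using primitive_diff[OF f, of 0 1] by simp
  finally show ?thesis unfolding integral_between_def .
qed

lemma primitive_param_has_derivative:
  fixes g gx :: "real \<Rightarrow> real \<Rightarrow> real"
  assumes d: "\<And>x b. ((\<lambda>x. g x b) has_real_derivative gx x b) (at x)"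
    and cg: "\<And>x. continuous_on UNIV (g x)"
    and cgx: "continuous_on UNIV (\<lambda>(x, b). gx x b)"
  shows "((\<lambda>x. primitive (g x) a) has_real_derivative primitive (gx x0) a) (at x0)"
proof -
  have leibniz: "((\<lambda>x. integral (cbox c e) (g x)) has_real_derivative integral (cbox c e) (gx x0))
      (at x0 within UNIV)" for c e
    by (rule leibniz_rule_field_derivative)
       (auto intro!: integrable_continuous_interval
             intro: continuous_on_subset[OF cg] continuous_on_subset[OF cgx] d)
  show ?thesis
  proof (cases "0 \<le> a")
    case True then show ?thesis using leibniz[of 0 a] by (simp add: primitive_def)
  next
    case False then show ?thesis
      using DERIV_minus[OF leibniz[of a 0]] by (simp add: primitive_def)
  qed
qed

definition has_partials :: "(real\<Rightarrow>real\<Rightarrow>real) \<Rightarrow> (real\<Rightarrow>real\<Rightarrow>real) \<Rightarrow> (real\<Rightarrow>real\<Rightarrow>real) \<Rightarrow> bool" where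
  "has_partials G Ga Gt \<longleftrightarrow>
     (\<forall>a s. ((\<lambda>p. G (fst p) (snd p)) has_derivative (\<lambda>p. Ga a s * fst p + Gt a s * snd p)) (at (a,s)))"

lemma has_partialsI:
  assumes "\<And>a s. ((\<lambda>a. G a s) has_real_derivative Ga a s) (at a)"
    and "continuous_on UNIV (\<lambda>p. Ga (fst p) (snd p))"
    and "\<And>a s. ((\<lambda>s. G a s) has_real_derivative Gt a s) (at s)"
  shows "has_partials G Ga Gt"
  unfolding has_partials_def
  using has_derivative_of_partials[where f=G and fx=Ga and S=UNIV] assms by auto

lemma has_partials_add:
  assumes "has_partials G Ga Gt" "has_partials H Ha Ht"
  shows "has_partials (\<lambda>a s. G a s + H a s) (\<lambda>a s. Ga a s + Ha a s) (\<lambda>a s. Gt a s + Ht a s)"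
  using assms unfolding has_partials_def
  by (auto intro!: has_derivative_eq_rhs[OF has_derivative_add] simp: algebra_simps fun_eq_iff)

lemma has_partials_mult:
  assumes "has_partials G Ga Gt" "has_partials H Ha Ht"
  shows "has_partials (\<lambda>a s. G a s * H a s) (\<lambda>a s. Ga a s * H a s + G a s * Ha a s)
           (\<lambda>a s. Gt a s * H a s + G a s * Ht a s)"
  unfolding has_partials_def
proof (intro allI)
  fix a s
  have "((\<lambda>p. G (fst p) (snd p) * H (fst p) (snd p)) has_derivative
      (\<lambda>h. G (fst (a,s)) (snd (a,s)) * (Ha a s * fst h + Ht a s * snd h)
           + (Ga a s * fst h + Gt a s * snd h) * H (fst (a,s)) (snd (a,s)))) (at (a,s))"
    using assms unfolding has_partials_def by (intro has_derivative_mult) auto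
  then show "((\<lambda>p. G (fst p) (snd p) * H (fst p) (snd p)) has_derivative
      (\<lambda>p. (Ga a s * H a s + G a s * Ha a s) * fst p + (Gt a s * H a s + G a s * Ht a s) * snd p)) (at (a,s))"
    by (rule has_derivative_eq_rhs) (auto simp: algebra_simps fun_eq_iff)
qed

lemma has_partials_const: "has_partials (\<lambda>a s. c) (\<lambda>a s. 0) (\<lambda>a s. 0)"
  unfolding has_partials_def by (auto intro!: has_derivative_eq_rhs[OF has_derivative_const])

lemma has_partials_snd: "has_partials (\<lambda>a s. s) (\<lambda>a s. 0) (\<lambda>a s. 1)"
  unfolding has_partials_def
  by (auto intro!: has_derivative_eq_rhs[OF has_derivative_snd[OF has_derivative_ident]])

lemma has_partials_fst_fun:
  assumes "\<And>a. (f has_real_derivative f' a) (at a)"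
  shows "has_partials (\<lambda>a s. f a) (\<lambda>a s. f' a) (\<lambda>a s. 0)"
  unfolding has_partials_def
proof (intro allI)
  fix a s :: real
  have "(f has_derivative (\<lambda>h. h * f' a)) (at a)"
    using assms[of a] unfolding has_field_derivative_def
    by (rule has_derivative_eq_rhs) (simp add: fun_eq_iff mult.commute)
  then have "(f has_derivative (\<lambda>h. h * f' a)) (at (fst (a,s)))" by simp
  from has_derivative_compose[OF has_derivative_fst[OF has_derivative_ident] this]
  show "((\<lambda>p. f (fst p)) has_derivative (\<lambda>p. f' a * fst p + 0 * snd p)) (at (a, s))"
    by (rule has_derivative_eq_rhs) (auto simp: fun_eq_iff mult.commute)
qed

lemma has_partials_snd_fun:
  assumes "\<And>s. (f has_real_derivative f' s) (at s)"
  shows "has_partials (\<lambda>a s. f s) (\<lambda>a s. 0) (\<lambda>a s. f' s)"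
  by (rule has_partialsI) (use assms in auto)

lemma has_partials_continuous:
  assumes "has_partials G Ga Gt"
  shows "continuous_on UNIV (\<lambda>p. G (fst p) (snd p))"
proof (intro continuous_at_imp_continuous_on ballI)
  fix p :: "real \<times> real"
  show "isCont (\<lambda>p. G (fst p) (snd p)) p"
    using assms unfolding has_partials_def by (cases p) (blast intro: has_derivative_continuous)
qed

lemma has_partials_fst_deriv:
  assumes "has_partials G Ga Gt"
  shows "((\<lambda>a. G a s) has_real_derivative Ga a s) (at a)"
proof -
  have P: "((\<lambda>a. (a, s)) has_derivative (\<lambda>h. (h, 0))) (at a)"
    by (intro has_derivative_Pair has_derivative_ident has_derivative_const)
  have G: "((\<lambda>p. G (fst p) (snd p)) has_derivative (\<lambda>p. Ga a s * fst p + Gt a s * snd p))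
      (at ((\<lambda>a. (a,s)) a))"
    using assms unfolding has_partials_def by simp
  show ?thesis unfolding has_field_derivative_def
    using has_derivative_compose[OF P G] by (simp add: has_derivative_eq_rhs fun_eq_iff algebra_simps)
qed

lemma at_within_Ico_nontrivial: "0 \<le> t \<Longrightarrow> t < (T::real) \<Longrightarrow> at t within {0..<T} \<noteq> bot"
  using trivial_limit_within[of t "{0..<T::real}"] islimpt_Ico[of 0 T t] by (auto simp: trivial_limit_def)

lemma pdt_eqI:
  fixes f :: "real \<Rightarrow> real \<Rightarrow> real" and T :: real
  assumes t: "0 \<le> t" "t < T"
    and eq: "\<And>s. 0 \<le> s \<Longrightarrow> s < T \<Longrightarrow> f x s = g s"
    and d: "(g has_real_derivative D) (at t)"
  shows "((\<lambda>s. f x s) has_real_derivative D) (at t within {0..<T})" and "pdt T f x t = D"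
proof -
  show fd: "((\<lambda>s. f x s) has_real_derivative D) (at t within {0..<T})"
    by (rule has_field_derivative_transform_within[OF has_field_derivative_at_within[OF d], of 1])
       (use t eq in auto)
  show "pdt T f x t = D" unfolding pdt_def
    by (rule vector_derivative_within[OF at_within_Ico_nontrivial[OF t]])
       (use fd in \<open>simp add: has_real_derivative_iff_has_vector_derivative\<close>)
qed

section \<open>Moments of the initial slope\<close>

text \<open>\<open>moment u\<^sub>0 0 t\<close> is the normalising factor \<open>Z(t) = \<integral>\<^sub>0\<^sup>1 exp (t u\<^sub>0')\<close> of the theorem.\<close>

definition moment :: "(real \<Rightarrow> real) \<Rightarrow> nat \<Rightarrow> real \<Rightarrow> real" where
  "moment u0 k t = integral {0..1} (\<lambda>b. deriv u0 b ^ k * exp (t * deriv u0 b))"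

locale periodic_initial_data =
  fixes u0 :: "real \<Rightarrow> real"
  assumes smooth: "smooth1 u0" and periodic: "\<And>x. u0 (x + 1) = u0 x"
begin

lemma higher_deriv_has_derivative: "((deriv^^k) u0 has_real_derivative (deriv^^(Suc k)) u0 x) (at x)"
  using smooth unfolding smooth1_def by (simp add: DERIV_deriv_iff_real_differentiable)

lemma continuous_on_higher_deriv [continuous_intros]:
  "continuous_on S f \<Longrightarrow> continuous_on S (\<lambda>x. (deriv^^k) u0 (f x))"
  by (rule continuous_on_compose2[of UNIV])
     (auto intro: continuous_at_imp_continuous_on DERIV_isCont[OF higher_deriv_has_derivative])

lemma continuous_on_deriv [continuous_intros]:
  "continuous_on S f \<Longrightarrow> continuous_on S (\<lambda>x. deriv u0 (f x))"
  using continuous_on_higher_deriv[of S f 1] by simp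

lemma continuous_on_deriv2 [continuous_intros]:
  "continuous_on S f \<Longrightarrow> continuous_on S (\<lambda>x. deriv (deriv u0) (f x))"
  using continuous_on_higher_deriv[of S f 2] by (simp add: numeral_2_eq_2)

lemma has_derivative_u0: "(u0 has_real_derivative deriv u0 x) (at x)"
  using higher_deriv_has_derivative[of 0] by simp

lemma has_derivative_deriv_u0: "(deriv u0 has_real_derivative deriv (deriv u0) x) (at x)"
  using higher_deriv_has_derivative[of 1] by simp

lemma deriv_u0_periodic: "deriv u0 (x+1) = deriv u0 x"
  using deriv_periodic[of u0 x] periodic has_derivative_u0 real_differentiable_def by blast

lemma has_integral_affine_deriv_u0: "((\<lambda>b. c + t * deriv u0 b) has_integral c) {0..1}"
proof -
  have "((\<lambda>b. c + t * deriv u0 b) has_integral ((c * 1 + t * u0 1) - (c * 0 + t * u0 0))) {0..1}"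
    by (rule fundamental_theorem_of_calculus)
       (auto simp: has_real_derivative_iff_has_vector_derivative[symmetric]
             intro!: derivative_eq_intros has_field_derivative_at_within[OF has_derivative_u0])
  then show ?thesis using periodic[of 0] by simp
qed

lemma continuous_on_moment_integrand [continuous_intros]:
  "continuous_on S (\<lambda>b. deriv u0 b ^ k * exp (t * deriv u0 b))"
  by (intro continuous_intros)

lemma has_integral_moment:
  "((\<lambda>b. deriv u0 b ^ k * exp (t * deriv u0 b)) has_integral moment u0 k t) {0..1}"
  unfolding moment_def by (intro integrable_integral integrable_continuous_interval continuous_intros)

lemma moment_has_derivative: "(moment u0 k has_real_derivative moment u0 (Suc k) t) (at t)"
proof -
  have "((\<lambda>x. integral (cbox 0 1) (\<lambda>b. deriv u0 b ^ k * exp (x * deriv u0 b))) has_field_derivative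
        integral (cbox 0 1) (\<lambda>b. deriv u0 b ^ k * (exp (t * deriv u0 b) * deriv u0 b))) (at t within UNIV)"
    by (rule leibniz_rule_field_derivative)
       (auto intro!: derivative_eq_intros integrable_continuous_interval continuous_intros
             simp: split_beta)
  then show ?thesis unfolding moment_def by (simp add: mult_ac)
qed

lemma moment_0_at_0: "moment u0 0 0 = 1"
  by (simp add: moment_def)

lemma moment_1_at_0: "moment u0 1 0 = 0"
  using has_integral_affine_deriv_u0[of 0 1] by (simp add: moment_def integral_unique)

text \<open>Jensen: \<open>exp y \<ge> 1 + y\<close> and \<open>\<integral>\<^sub>0\<^sup>1 u\<^sub>0' = 0\<close>.\<close>

lemma moment_0_ge_1: "1 \<le> moment u0 0 t"
proof -
  have "integral {0..1} (\<lambda>b. 1 + t * deriv u0 b) \<le> integral {0..1} (\<lambda>b. exp (t * deriv u0 b))"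
    by (rule integral_le) (auto intro!: integrable_continuous_interval continuous_intros)
  then show ?thesis
    using has_integral_affine_deriv_u0[of 1 t] by (simp add: moment_def integral_unique)
qed

lemma moment_0_pos: "0 < moment u0 0 t"
  using moment_0_ge_1[of t] by simp

text \<open>For \<open>t \<ge> 0\<close>, \<open>y \<le> y exp (t y)\<close> pointwise and \<open>\<integral>\<^sub>0\<^sup>1 u\<^sub>0' = 0\<close>.\<close>

lemma moment_1_nonneg:
  assumes "0 \<le> t"
  shows "0 \<le> moment u0 1 t"
proof -
  have "integral {0..1} (\<lambda>b. 0 + 1 * deriv u0 b) \<le> integral {0..1} (\<lambda>b. deriv u0 b * exp (t * deriv u0 b))"
  proof (rule integral_le)
    fix b
    show "0 + 1 * deriv u0 b \<le> deriv u0 b * exp (t * deriv u0 b)"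
    proof (cases "deriv u0 b \<ge> 0")
      case True
      then have "1 \<le> exp (t * deriv u0 b)" using assms by simp
      then show ?thesis using True by (metis add_0 mult_1 mult.right_neutral mult_left_mono)
    next
      case False
      then have "exp (t * deriv u0 b) \<le> 1" using assms by (simp add: mult_nonneg_nonpos)
      then show ?thesis using False by (simp add: mult_le_cancel_left1)
    qed
  qed (auto intro!: integrable_continuous_interval continuous_intros)
  then show ?thesis
    using has_integral_affine_deriv_u0[of 0 1] by (simp add: moment_def integral_unique)
qed

end

section \<open>The formulas along characteristics\<close>

text \<open>We work on a compact time interval \<open>[0,t\<^sub>1] \<subseteq> [0,T)\<close>, where periodicity makes the
  derivatives of \<open>u\<close> bounded and uniformly continuous.\<close>

locale characteristic_flow = periodic_initial_data +
  fixes T t1 :: real and u \<gamma> :: "real \<Rightarrow> real \<Rightarrow> real"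
  assumes solution: "is_solution u0 T u" and characteristic: "is_characteristic T u \<gamma>"
    and t1: "0 \<le> t1" "t1 < T"
begin

lemma pd_has_derivative_x:
  "0 \<le> s \<Longrightarrow> s < T \<Longrightarrow> ((\<lambda>y. pd T ds u y s) has_real_derivative pd T (True#ds) u x s) (at x)"
  using solution unfolding is_solution_def smooth_on_strip_def
  by (simp add: pdx_def DERIV_deriv_iff_real_differentiable)

lemma pd_has_derivative_t:
  assumes "s \<in> {0..t1}"
  shows "((\<lambda>r. pd T ds u x r) has_real_derivative pd T (False#ds) u x s) (at s within {0..t1})"
proof -
  have "((\<lambda>r. pd T ds u x r) has_real_derivative pd T (False#ds) u x s) (at s within {0..<T})"
    using solution assms t1 unfolding is_solution_def smooth_on_strip_def
    by (simp add: pdt_def has_real_derivative_iff_has_vector_derivative vector_derivative_works[symmetric])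
  then show ?thesis by (rule DERIV_subset) (use t1 in auto)
qed

lemma continuous_on_pd: "continuous_on (UNIV \<times> {0..t1}) (\<lambda>p. pd T ds u (fst p) (snd p))"
proof -
  have "continuous_on (UNIV \<times> {0..<T}) (\<lambda>p. pd T ds u (fst p) (snd p))"
    using solution unfolding is_solution_def smooth_on_strip_def by blast
  then show ?thesis by (rule continuous_on_subset) (use t1 in auto)
qed

lemma characteristic_has_derivative:
  "s \<in> {0..t1} \<Longrightarrow> ((\<lambda>r. \<gamma> \<beta> r) has_real_derivative u (\<gamma> \<beta> s) s) (at s within {0..t1})"
proof -
  assume s: "s \<in> {0..t1}"
  then have "((\<lambda>r. \<gamma> \<beta> r) has_real_derivative u (\<gamma> \<beta> s) s) (at s within {0..<T})"
    using characteristic t1 unfolding is_characteristic_def by auto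
  then show ?thesis by (rule DERIV_subset) (use t1 in auto)
qed

lemma characteristic_at_0: "\<gamma> \<beta> 0 = \<beta>"
  using characteristic unfolding is_characteristic_def by simp

lemma ux_at_0: "pd T [True] u y 0 = deriv u0 y"
proof -
  have "(\<lambda>y. u y 0) = u0" using solution unfolding is_solution_def by auto
  then show ?thesis by (simp add: pdx_def)
qed

lemma u_periodic: "s \<in> {0..t1} \<Longrightarrow> u (x+1) s = u x s"
  using solution t1 unfolding is_solution_def by simp

lemma ux_periodic: "s \<in> {0..t1} \<Longrightarrow> pd T [True] u (x+1) s = pd T [True] u x s"
proof -
  assume s: "s \<in> {0..t1}"
  have "(\<lambda>y. u y s) differentiable at (x+1)"
    using pd_has_derivative_x[of s "[]" "x+1"] s t1 by (auto simp: real_differentiable_def)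
  then have "deriv (\<lambda>y. u y s) (x+1) = deriv (\<lambda>y. u y s) x"
    by (rule deriv_periodic[rotated]) (rule u_periodic[OF s])
  then show ?thesis by (simp add: pdx_def)
qed

text \<open>The equation says precisely that \<open>u\<^sub>x\<close> changes along every characteristic at the
  same rate \<open>-\<integral>\<^sub>0\<^sup>1 u\<^sub>x\<^sup>2\<close>.\<close>

lemma ux_along_characteristic_has_derivative:
  assumes s: "s \<in> {0..t1}"
  shows "((\<lambda>r. pd T [True] u (\<gamma> \<beta> r) r) has_real_derivative
           - integral {0..1} (\<lambda>y. (pd T [True] u y s)\<^sup>2)) (at s within {0..t1})"
proof -
  let ?S = "{0..t1}"
  let ?fx = "pd T [True,True] u (\<gamma> \<beta> s) s" and ?ft = "pd T [False,True] u (\<gamma> \<beta> s) s"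
  have J: "((\<lambda>p. pd T [True] u (fst p) (snd p)) has_derivative (\<lambda>p. ?fx * fst p + ?ft * snd p))
      (at (\<gamma> \<beta> s, s) within UNIV \<times> ?S)"
    by (rule has_derivative_of_partials[where fx="pd T [True,True] u"])
       (use pd_has_derivative_x[of _ "[True]"] t1 continuous_on_pd[of "[True,True]"]
            pd_has_derivative_t[OF s, of "[True]"] s in auto)
  have G: "((\<lambda>r. (\<gamma> \<beta> r, r)) has_derivative (\<lambda>h. (u (\<gamma> \<beta> s) s * h, h))) (at s within ?S)"
    using characteristic_has_derivative[OF s, of \<beta>]
    by (auto intro!: has_derivative_Pair has_derivative_ident simp: has_field_derivative_def)
  have "((\<lambda>p. pd T [True] u (fst p) (snd p)) \<circ> (\<lambda>r. (\<gamma> \<beta> r, r)) has_derivative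
         (\<lambda>p. ?fx * fst p + ?ft * snd p) \<circ> (\<lambda>h. (u (\<gamma> \<beta> s) s * h, h))) (at s within ?S)"
    by (rule diff_chain_within[OF G has_derivative_subset[OF J]]) auto
  then have "((\<lambda>r. pd T [True] u (\<gamma> \<beta> r) r) has_real_derivative ?ft + u (\<gamma> \<beta> s) s * ?fx) (at s within ?S)"
    unfolding has_field_derivative_def o_def fst_conv snd_conv
    by (rule has_derivative_eq_rhs) (auto simp: fun_eq_iff algebra_simps)
  moreover have "?ft + u (\<gamma> \<beta> s) s * ?fx = - integral {0..1} (\<lambda>y. (pd T [True] u y s)\<^sup>2)"
    using solution s t1 unfolding is_solution_def by auto
  ultimately show ?thesis by simp
qed

definition drift :: "real \<Rightarrow> real" where
  "drift r = deriv u0 0 - pd T [True] u (\<gamma> 0 r) r"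

lemma ux_along_characteristic:
  assumes s: "s \<in> {0..t1}"
  shows "pd T [True] u (\<gamma> \<beta> s) s = deriv u0 \<beta> - drift s"
proof -
  define e where "e r = pd T [True] u (\<gamma> \<beta> r) r - pd T [True] u (\<gamma> 0 r) r" for r
  have "(e has_field_derivative 0) (at r within {0..t1})" if "r \<in> {0..t1}" for r
    using DERIV_diff[OF ux_along_characteristic_has_derivative[OF that, of \<beta>]
                        ux_along_characteristic_has_derivative[OF that, of 0]]
    unfolding e_def by simp
  then have "\<exists>c. \<forall>r\<in>{0..t1}. e r = c"
    by (intro has_field_derivative_zero_constant) auto
  then have "e s = e 0" using s t1 by auto
  then show ?thesis unfolding e_def drift_def using ux_at_0 by (simp add: characteristic_at_0)
qed

lemma ux_bounded: "\<exists>M\<ge>0. \<forall>x. \<forall>s\<in>{0..t1}. \<bar>pd T [True] u x s\<bar> \<le> M"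
proof -
  obtain B where "\<forall>x. \<forall>s\<in>{0..t1}. \<bar>pd T [True] u x s\<bar> \<le> B"
    using periodic_bounded_on_strip[OF continuous_on_pd] ux_periodic by blast
  moreover then have "0 \<le> B" using t1 by (meson abs_ge_zero atLeastAtMost_iff order_trans order_refl)
  ultimately show ?thesis by blast
qed

lemma u_lipschitz:
  assumes s: "s \<in> {0..t1}" and M: "\<forall>x. \<forall>s\<in>{0..t1}. \<bar>pd T [True] u x s\<bar> \<le> M"
  shows "\<bar>u y s - u y' s\<bar> \<le> M * \<bar>y - y'\<bar>"
proof -
  obtain \<xi> where "u y s - u y' s = (y - y') * pd T [True] u \<xi> s"
    using MVT_within_distance[of "\<lambda>y. u y s" "\<lambda>y. pd T [True] u y s" y' y]
      pd_has_derivative_x[of s "[]"] s t1 by auto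
  then have "\<bar>u y s - u y' s\<bar> = \<bar>y - y'\<bar> * \<bar>pd T [True] u \<xi> s\<bar>" by (simp add: abs_mult)
  also have "\<dots> \<le> \<bar>y - y'\<bar> * M" using M s by (intro mult_left_mono) auto
  finally show ?thesis by (simp add: mult.commute)
qed

text \<open>Uniqueness of characteristics: \<open>\<gamma>(\<beta>+1,\<cdot>)\<close> and \<open>\<gamma>(\<beta>,\<cdot>)+1\<close> solve the same
  Lipschitz ODE with the same initial value.\<close>

lemma characteristic_shift:
  assumes s: "s \<in> {0..t1}"
  shows "\<gamma> (\<beta>+1) s = \<gamma> \<beta> s + 1"
proof -
  obtain M where M0: "M \<ge> 0" and M: "\<forall>x. \<forall>s\<in>{0..t1}. \<bar>pd T [True] u x s\<bar> \<le> M"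
    using ux_bounded by blast
  define e where "e r = \<gamma> (\<beta>+1) r - \<gamma> \<beta> r - 1" for r
  have "(e s)^2 \<le> ((e 0)^2 + 0^2) * exp ((2*M+1) * s)"
  proof (rule gronwall_squared[of s t1 M 0 e "\<lambda>r. u (\<gamma> (\<beta>+1) r) r - u (\<gamma> \<beta> r) r"])
    fix r assume r: "r \<in> {0..t1}"
    show "(e has_real_derivative u (\<gamma> (\<beta>+1) r) r - u (\<gamma> \<beta> r) r) (at r within {0..t1})"
      unfolding e_def
      using DERIV_diff[OF DERIV_diff[OF characteristic_has_derivative characteristic_has_derivative] DERIV_const] r
      by simp
    have "u (\<gamma> \<beta> r) r = u (\<gamma> \<beta> r + 1) r" using u_periodic r by simp
    then show "\<bar>u (\<gamma> (\<beta>+1) r) r - u (\<gamma> \<beta> r) r\<bar> \<le> M * \<bar>e r\<bar> + 0"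
      using u_lipschitz[OF r M] unfolding e_def by (simp add: algebra_simps)
  qed (use s M0 in auto)
  then show ?thesis unfolding e_def by (simp add: characteristic_at_0)
qed

definition drift_integral :: "real \<Rightarrow> real" where
  "drift_integral t = integral {0..t} drift"

text \<open>\<open>stretch \<beta> t\<close> is the candidate for \<open>\<gamma>\<^sub>\<alpha>(\<beta>,t)\<close>, the solution of
  \<open>\<partial>\<^sub>t \<gamma>\<^sub>\<alpha> = u\<^sub>x(\<gamma>,t) \<gamma>\<^sub>\<alpha>\<close>, \<open>\<gamma>\<^sub>\<alpha>(\<beta>,0) = 1\<close>.\<close>

definition stretch :: "real \<Rightarrow> real \<Rightarrow> real" where
  "stretch \<beta> t = exp (t * deriv u0 \<beta> - drift_integral t)"

lemma drift_integral_has_derivative: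
  assumes "s \<in> {0..t1}"
  shows "(drift_integral has_real_derivative drift s) (at s within {0..t1})"
proof -
  have "continuous_on {0..t1} (\<lambda>r. pd T [True] u (\<gamma> 0 r) r)"
    unfolding continuous_on_eq_continuous_within
    using ux_along_characteristic_has_derivative DERIV_continuous by blast
  then have "continuous_on {0..t1} drift"
    unfolding drift_def[abs_def] by (intro continuous_intros)
  then show ?thesis
    unfolding drift_integral_def[abs_def] has_real_derivative_iff_has_vector_derivative
    using assms by (rule integral_has_vector_derivative)
qed

lemma stretch_at_0: "stretch \<beta> 0 = 1"
  by (simp add: stretch_def drift_integral_def)

lemma stretch_has_derivative:
  assumes s: "s \<in> {0..t1}"
  shows "((\<lambda>r. stretch \<beta> r) has_real_derivative pd T [True] u (\<gamma> \<beta> s) s * stretch \<beta> s)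
           (at s within {0..t1})"
  unfolding stretch_def ux_along_characteristic[OF s]
  by (auto intro!: derivative_eq_intros drift_integral_has_derivative[OF s] simp: mult.commute)

lemma characteristic_difference_bound:
  assumes M0: "0 \<le> M" and M: "\<forall>x. \<forall>s\<in>{0..t1}. \<bar>pd T [True] u x s\<bar> \<le> M"
    and s: "s \<in> {0..t1}"
  shows "\<bar>\<gamma> (\<beta>+h) s - \<gamma> \<beta> s\<bar> \<le> \<bar>h\<bar> * exp ((2*M+1) * t1)"
proof -
  define B where "B = exp ((2*M+1) * t1)"
  have B1: "1 \<le> B" unfolding B_def using M0 t1 by simp
  define d where "d r = \<gamma> (\<beta>+h) r - \<gamma> \<beta> r" for r
  have "(d s)^2 \<le> ((d 0)^2 + 0^2) * exp ((2*M+1) * s)"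
  proof (rule gronwall_squared[of s t1 M 0 d "\<lambda>r. u (\<gamma> (\<beta>+h) r) r - u (\<gamma> \<beta> r) r"])
    fix r assume r: "r \<in> {0..t1}"
    show "(d has_real_derivative u (\<gamma> (\<beta>+h) r) r - u (\<gamma> \<beta> r) r) (at r within {0..t1})"
      unfolding d_def using DERIV_diff[OF characteristic_has_derivative characteristic_has_derivative] r
      by simp
    show "\<bar>u (\<gamma> (\<beta>+h) r) r - u (\<gamma> \<beta> r) r\<bar> \<le> M * \<bar>d r\<bar> + 0"
      using u_lipschitz[OF r M] unfolding d_def by simp
  qed (use s M0 in auto)
  also have "\<dots> \<le> h^2 * B"
    using s M0 by (simp add: d_def characteristic_at_0 B_def mult_left_mono mult_right_mono)
  also have "\<dots> \<le> h^2 * B^2" using B1 by (intro mult_left_mono) (auto simp: power2_eq_square)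
  finally have "(d s)^2 \<le> (\<bar>h\<bar> * B)^2" by (simp add: power_mult_distrib)
  then have "\<bar>d s\<bar> \<le> \<bar>\<bar>h\<bar> * B\<bar>" by (simp only: abs_le_square_iff)
  then show ?thesis using B1 by (simp add: d_def B_def)
qed

text \<open>The error \<open>e\<close> of the difference quotient solves \<open>e' = u\<^sub>x e + (small)\<close>, where the
  small term is controlled by the modulus of continuity of \<open>u\<^sub>x\<close> at scale \<open>\<bar>h\<bar> B\<close>;
  Gronwall then bounds \<open>e\<close> itself.\<close>

lemma velocity_difference_quotient_error:
  assumes M0: "0 \<le> M" and M: "\<forall>x. \<forall>s\<in>{0..t1}. \<bar>pd T [True] u x s\<bar> \<le> M"
    and r: "r \<in> {0..t1}" and h0: "h \<noteq> 0" and \<epsilon>: "0 \<le> \<epsilon>"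
    and close: "\<And>x y. \<bar>x - y\<bar> \<le> \<bar>h\<bar> * exp ((2*M+1) * t1) \<Longrightarrow>
                   \<bar>pd T [True] u x r - pd T [True] u y r\<bar> \<le> \<epsilon>"
  shows "\<bar>(u (\<gamma> (\<beta>+h) r) r - u (\<gamma> \<beta> r) r) / h - pd T [True] u (\<gamma> \<beta> r) r * stretch \<beta> r\<bar>
           \<le> M * \<bar>(\<gamma> (\<beta>+h) r - \<gamma> \<beta> r) / h - stretch \<beta> r\<bar> + \<epsilon> * exp ((2*M+1) * t1)"
proof -
  define B where "B = exp ((2*M+1) * t1)"
  define d where "d = \<gamma> (\<beta>+h) r - \<gamma> \<beta> r"
  define e where "e = d / h - stretch \<beta> r"
  let ?g = "\<gamma> \<beta> r"
  obtain \<xi> where xi: "\<bar>\<xi> - ?g\<bar> \<le> \<bar>d\<bar>" and mv: "u (?g + d) r - u ?g r = d * pd T [True] u \<xi> r"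
    using MVT_within_distance[of "\<lambda>y. u y r" "\<lambda>y. pd T [True] u y r" ?g "?g + d"]
      pd_has_derivative_x[of r "[]"] r t1 by auto
  have dB: "\<bar>d\<bar> \<le> \<bar>h\<bar> * B"
    unfolding d_def B_def by (rule characteristic_difference_bound[OF M0 M r])
  then have cl: "\<bar>pd T [True] u \<xi> r - pd T [True] u ?g r\<bar> \<le> \<epsilon>"
    using xi unfolding B_def by (intro close) linarith
  have qB: "\<bar>d / h\<bar> \<le> B" using dB h0 by (simp add: abs_divide divide_le_eq mult.commute)
  have "\<gamma> (\<beta>+h) r = ?g + d" by (simp add: d_def)
  then have "(u (\<gamma> (\<beta>+h) r) r - u ?g r) / h - pd T [True] u ?g r * stretch \<beta> r
      = pd T [True] u ?g r * e + (pd T [True] u \<xi> r - pd T [True] u ?g r) * (d / h)"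
    using mv h0 unfolding e_def by (simp add: field_simps)
  also have "\<bar>\<dots>\<bar> \<le> M * \<bar>e\<bar> + \<epsilon> * B"
  proof -
    have "\<bar>pd T [True] u ?g r * e\<bar> \<le> M * \<bar>e\<bar>"
      using M r by (simp add: abs_mult mult_right_mono)
    moreover have "\<bar>(pd T [True] u \<xi> r - pd T [True] u ?g r) * (d / h)\<bar> \<le> \<epsilon> * B"
      unfolding abs_mult using cl qB \<epsilon> by (intro mult_mono) auto
    ultimately show ?thesis
      using abs_triangle_ineq[of "pd T [True] u ?g r * e" "(pd T [True] u \<xi> r - pd T [True] u ?g r) * (d / h)"]
      by linarith
  qed
  finally show ?thesis unfolding e_def d_def B_def .
qed

lemma difference_quotient_error:
  assumes M0: "0 \<le> M" and M: "\<forall>x. \<forall>s\<in>{0..t1}. \<bar>pd T [True] u x s\<bar> \<le> M"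
    and t: "t \<in> {0..t1}" and h0: "h \<noteq> 0" and \<epsilon>: "0 \<le> \<epsilon>"
    and close: "\<And>x y r. r \<in> {0..t1} \<Longrightarrow> \<bar>x - y\<bar> \<le> \<bar>h\<bar> * exp ((2*M+1) * t1) \<Longrightarrow>
                   \<bar>pd T [True] u x r - pd T [True] u y r\<bar> \<le> \<epsilon>"
  shows "\<bar>(\<gamma> (\<beta>+h) t - \<gamma> \<beta> t) / h - stretch \<beta> t\<bar> \<le> \<epsilon> * exp ((2*M+1) * t1)^2"
proof -
  define B where "B = exp ((2*M+1) * t1)"
  have B1: "1 \<le> B" unfolding B_def using M0 t1 by simp
  define e where "e r = (\<gamma> (\<beta>+h) r - \<gamma> \<beta> r) / h - stretch \<beta> r" for r
  have "(e t)^2 \<le> ((e 0)^2 + (\<epsilon> * B)^2) * exp ((2*M+1) * t)"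
  proof (rule gronwall_squared[of t t1 M "\<epsilon> * B" e])
    fix r assume r: "r \<in> {0..t1}"
    show "(e has_real_derivative (u (\<gamma> (\<beta>+h) r) r - u (\<gamma> \<beta> r) r) / h
            - pd T [True] u (\<gamma> \<beta> r) r * stretch \<beta> r) (at r within {0..t1})"
      unfolding e_def
      using DERIV_diff[OF DERIV_cdivide[OF DERIV_diff[OF characteristic_has_derivative[OF r]
              characteristic_has_derivative[OF r]]] stretch_has_derivative[OF r]] by simp
    show "\<bar>(u (\<gamma> (\<beta>+h) r) r - u (\<gamma> \<beta> r) r) / h - pd T [True] u (\<gamma> \<beta> r) r * stretch \<beta> r\<bar>
            \<le> M * \<bar>e r\<bar> + \<epsilon> * B"
      unfolding e_def B_def using velocity_difference_quotient_error[OF M0 M r h0 \<epsilon> close[OF r]] .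
  qed (use t M0 \<epsilon> B1 in auto)
  also have "\<dots> \<le> (\<epsilon> * B)^2 * B"
    using t M0 h0 by (simp add: e_def characteristic_at_0 stretch_at_0 B_def mult_left_mono)
  also have "\<dots> \<le> (\<epsilon> * B)^2 * B^2" using B1 by (intro mult_left_mono) (auto simp: power2_eq_square)
  finally have "(e t)^2 \<le> (\<epsilon> * B^2)^2" by (simp add: power2_eq_square mult_ac)
  then have "\<bar>e t\<bar> \<le> \<bar>\<epsilon> * B^2\<bar>" by (simp only: abs_le_square_iff)
  then show ?thesis using \<epsilon> by (simp add: e_def B_def)
qed

lemma characteristic_has_derivative_alpha:
  assumes t: "t \<in> {0..t1}"
  shows "((\<lambda>a. \<gamma> a t) has_real_derivative stretch \<beta> t) (at \<beta>)"
  unfolding DERIV_def LIM_eq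
proof (intro allI impI)
  fix \<epsilon> :: real assume \<epsilon>: "0 < \<epsilon>"
  obtain M where M0: "M \<ge> 0" and M: "\<forall>x. \<forall>s\<in>{0..t1}. \<bar>pd T [True] u x s\<bar> \<le> M"
    using ux_bounded by blast
  define B where "B = exp ((2*M+1) * t1)"
  have B0: "0 < B" unfolding B_def by simp
  define \<epsilon>' where "\<epsilon>' = \<epsilon> / (2 * B^2)"
  have \<epsilon>': "0 < \<epsilon>'" unfolding \<epsilon>'_def using \<epsilon> B0 by simp
  obtain \<delta> where \<delta>: "\<delta> > 0" and close: "\<forall>x y s s'. s \<in> {0..t1} \<longrightarrow> s' \<in> {0..t1} \<longrightarrow>
           \<bar>x - y\<bar> < \<delta> \<longrightarrow> \<bar>s - s'\<bar> < \<delta> \<longrightarrow> \<bar>pd T [True] u x s - pd T [True] u y s'\<bar> < \<epsilon>'"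
    using periodic_uniformly_continuous_on_strip[OF continuous_on_pd _ \<epsilon>'] ux_periodic by blast
  show "\<exists>r>0. \<forall>h. h \<noteq> 0 \<and> norm (h - 0) < r \<longrightarrow>
          norm ((\<gamma> (\<beta> + h) t - \<gamma> \<beta> t) / h - stretch \<beta> t) < \<epsilon>"
  proof (intro exI[of _ "\<delta> / B"] conjI allI impI)
    show "0 < \<delta> / B" using \<delta> B0 by simp
    fix h :: real assume h: "h \<noteq> 0 \<and> norm (h - 0) < \<delta> / B"
    then have hB: "\<bar>h\<bar> * B < \<delta>" using B0 by (simp add: pos_less_divide_eq)
    have "\<bar>pd T [True] u x r - pd T [True] u y r\<bar> \<le> \<epsilon>'"
      if "r \<in> {0..t1}" "\<bar>x - y\<bar> \<le> \<bar>h\<bar> * B" for x y r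
    proof -
      have "\<bar>x - y\<bar> < \<delta>" "\<bar>r - r\<bar> < \<delta>" using that hB \<delta> by auto
      then show ?thesis using close that(1) by (meson less_imp_le)
    qed
    then have "\<bar>(\<gamma> (\<beta>+h) t - \<gamma> \<beta> t) / h - stretch \<beta> t\<bar> \<le> \<epsilon>' * B^2"
      using difference_quotient_error[OF M0 M t, of h \<epsilon>' \<beta>] h \<epsilon>' unfolding B_def by simp
    also have "\<dots> < \<epsilon>" unfolding \<epsilon>'_def using \<epsilon> B0 by simp
    finally show "norm ((\<gamma> (\<beta> + h) t - \<gamma> \<beta> t) / h - stretch \<beta> t) < \<epsilon>" by simp
  qed
qed

text \<open>\<open>\<integral>\<^sub>0\<^sup>1 \<gamma>\<^sub>\<alpha> = \<gamma>(1,t) - \<gamma>(0,t) = 1\<close>.\<close>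

lemma moment_0_eq_exp_drift_integral:
  assumes t: "t \<in> {0..t1}"
  shows "moment u0 0 t = exp (drift_integral t)"
proof -
  have "((\<lambda>a. stretch a t) has_integral (\<gamma> 1 t - \<gamma> 0 t)) {0..1}"
    by (rule fundamental_theorem_of_calculus)
       (auto simp: has_real_derivative_iff_has_vector_derivative[symmetric]
             intro!: has_field_derivative_at_within characteristic_has_derivative_alpha[OF t])
  moreover have "\<gamma> 1 t - \<gamma> 0 t = 1" using characteristic_shift[OF t, of 0] by simp
  moreover have "(\<lambda>a. stretch a t) = (\<lambda>a. exp (t * deriv u0 a) * exp (- drift_integral t))"
    by (simp add: stretch_def fun_eq_iff exp_diff exp_minus field_simps)
  moreover have "((\<lambda>a. exp (t * deriv u0 a) * exp (- drift_integral t)) has_integral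
      moment u0 0 t * exp (- drift_integral t)) {0..1}"
    using has_integral_mult_left[OF has_integral_moment[of 0 t]] by simp
  ultimately have "moment u0 0 t * exp (- drift_integral t) = 1"
    using has_integral_unique by metis
  then show ?thesis by (simp add: exp_minus field_simps)
qed

lemma drift_eq_moment_ratio:
  assumes t: "0 \<le> t" "t < t1"
  shows "drift t = moment u0 1 t / moment u0 0 t"
proof (cases "t = 0")
  case True
  then show ?thesis using ux_at_0[of 0] moment_1_at_0 by (simp add: drift_def characteristic_at_0)
next
  case False
  then have tin: "t \<in> {0<..<t1}" using t by auto
  have "at t within {0..t1} = at t" using tin by (intro at_within_interior) auto
  then have dK: "(drift_integral has_real_derivative drift t) (at t)"
    using drift_integral_has_derivative[of t] t by auto
  have "((\<lambda>s. ln (moment u0 0 s)) has_real_derivative moment u0 1 t / moment u0 0 t) (at t)"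
    using moment_has_derivative[of 0 t] moment_0_pos[of t]
    by (auto intro!: derivative_eq_intros simp: field_simps)
  then have "(drift_integral has_real_derivative moment u0 1 t / moment u0 0 t) (at t)"
    by (rule has_field_derivative_transform_within_open[of _ _ _ "{0<..<t1}"])
       (use tin moment_0_eq_exp_drift_integral in auto)
  then show ?thesis using DERIV_unique[OF dK] by blast
qed

lemma characteristic_formulas:
  assumes t: "0 \<le> t" "t < t1"
  shows "((\<lambda>a. \<gamma> a t) has_real_derivative exp (t * deriv u0 \<alpha>) / moment u0 0 t) (at \<alpha>)"
    and "pd T [True] u (\<gamma> \<alpha> t) t = deriv u0 \<alpha> - moment u0 1 t / moment u0 0 t"
    and "0 \<le> deriv u0 \<alpha> - pd T [True] u (\<gamma> \<alpha> t) t"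
    and "deriv u0 \<alpha> - pd T [True] u (\<gamma> \<alpha> t) t \<le> moment u0 1 t"
proof -
  have tS: "t \<in> {0..t1}" using t by auto
  have "stretch \<alpha> t = exp (t * deriv u0 \<alpha>) / moment u0 0 t"
    using moment_0_eq_exp_drift_integral[OF tS] by (simp add: stretch_def exp_diff)
  then show "((\<lambda>a. \<gamma> a t) has_real_derivative exp (t * deriv u0 \<alpha>) / moment u0 0 t) (at \<alpha>)"
    using characteristic_has_derivative_alpha[OF tS, of \<alpha>] by simp
  show ux: "pd T [True] u (\<gamma> \<alpha> t) t = deriv u0 \<alpha> - moment u0 1 t / moment u0 0 t"
    using ux_along_characteristic[OF tS] drift_eq_moment_ratio[OF t] by simp
  have Z0: "1 \<le> moment u0 0 t" and Z1: "0 \<le> moment u0 1 t"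
    using moment_0_ge_1 moment_1_nonneg t by auto
  then show "0 \<le> deriv u0 \<alpha> - pd T [True] u (\<gamma> \<alpha> t) t" unfolding ux by simp
  have "moment u0 1 t / moment u0 0 t \<le> moment u0 1 t"
    using Z0 Z1 by (simp add: divide_le_eq mult_le_cancel_left1)
  then show "deriv u0 \<alpha> - pd T [True] u (\<gamma> \<alpha> t) t \<le> moment u0 1 t" unfolding ux by simp
qed

end

section \<open>An explicit global solution\<close>

definition partial_moment :: "(real \<Rightarrow> real) \<Rightarrow> nat \<Rightarrow> real \<Rightarrow> real \<Rightarrow> real" where
  "partial_moment u0 k a s = integral_between 0 a (\<lambda>b. deriv u0 b ^ k * exp (s * deriv u0 b))"

text \<open>Functions of \<open>(\<alpha>,t)\<close> generated by the data; every partial derivative of the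
  explicit solution will be of the form \<open>G(\<Gamma>\<^sup>-\<^sup>1(x,t),t)\<close> with \<open>G\<close> in this algebra.\<close>

inductive_set flow_algebra :: "(real \<Rightarrow> real) \<Rightarrow> (real \<Rightarrow> real \<Rightarrow> real) set" for u0 where
  const: "(\<lambda>a s. c) \<in> flow_algebra u0"
| time: "(\<lambda>a s. s) \<in> flow_algebra u0"
| higher_deriv: "(\<lambda>a s. (deriv^^k) u0 a) \<in> flow_algebra u0"
| exp_pos: "(\<lambda>a s. exp (s * deriv u0 a)) \<in> flow_algebra u0"
| exp_neg: "(\<lambda>a s. exp (- (s * deriv u0 a))) \<in> flow_algebra u0"
| partial_moment: "(\<lambda>a s. partial_moment u0 k a s) \<in> flow_algebra u0"
| moment: "(\<lambda>a s. moment u0 k s) \<in> flow_algebra u0"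
| inverse_moment_0: "(\<lambda>a s. 1 / moment u0 0 s) \<in> flow_algebra u0"
| add: "G \<in> flow_algebra u0 \<Longrightarrow> H \<in> flow_algebra u0 \<Longrightarrow> (\<lambda>a s. G a s + H a s) \<in> flow_algebra u0"
| mult: "G \<in> flow_algebra u0 \<Longrightarrow> H \<in> flow_algebra u0 \<Longrightarrow> (\<lambda>a s. G a s * H a s) \<in> flow_algebra u0"

lemma flow_algebra_deriv: "(\<lambda>a s. deriv u0 a) \<in> flow_algebra u0"
  using flow_algebra.higher_deriv[of 1 u0] by simp

lemma flow_algebra_deriv2: "(\<lambda>a s. deriv (deriv u0) a) \<in> flow_algebra u0"
  using flow_algebra.higher_deriv[of 2 u0] by (simp add: numeral_2_eq_2)

lemma flow_algebra_power_deriv: "(\<lambda>a s. deriv u0 a ^ k) \<in> flow_algebra u0"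
proof (induction k)
  case 0 then show ?case using flow_algebra.const[of 1 u0] by simp
next
  case (Suc k)
  then show ?case using flow_algebra.mult[OF flow_algebra_deriv Suc] by simp
qed

lemma flow_algebra_diff:
  "G \<in> flow_algebra u0 \<Longrightarrow> H \<in> flow_algebra u0 \<Longrightarrow> (\<lambda>a s. G a s - H a s) \<in> flow_algebra u0"
proof -
  assume "G \<in> flow_algebra u0" "H \<in> flow_algebra u0"
  then have "(\<lambda>a s. G a s + (-1) * H a s) \<in> flow_algebra u0"
    by (intro flow_algebra.add flow_algebra.mult flow_algebra.const)
  then show ?thesis by simp
qed

context periodic_initial_data
begin

lemma partial_moment_has_derivative_fst:
  "((\<lambda>a. partial_moment u0 k a s) has_real_derivative deriv u0 a ^ k * exp (s * deriv u0 a)) (at a)"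
  unfolding partial_moment_def by (rule integral_between_has_derivative) (intro continuous_intros)

lemma partial_moment_has_derivative_snd:
  "((\<lambda>s. partial_moment u0 k a s) has_real_derivative partial_moment u0 (Suc k) a s) (at s)"
proof -
  have d: "((\<lambda>x. deriv u0 b ^ k * exp (x * deriv u0 b)) has_real_derivative
              deriv u0 b ^ k * (exp (x * deriv u0 b) * deriv u0 b)) (at x)" for x b
    by (auto intro!: derivative_eq_intros)
  have "continuous_on UNIV (\<lambda>(x, b). deriv u0 b ^ k * (exp (x * deriv u0 b) * deriv u0 b))"
    unfolding split_beta by (intro continuous_intros)
  then have "((\<lambda>x. primitive (\<lambda>b. deriv u0 b ^ k * exp (x * deriv u0 b)) a
                 - primitive (\<lambda>b. deriv u0 b ^ k * exp (x * deriv u0 b)) 0)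
        has_real_derivative primitive (\<lambda>b. deriv u0 b ^ k * (exp (s * deriv u0 b) * deriv u0 b)) a
                          - primitive (\<lambda>b. deriv u0 b ^ k * (exp (s * deriv u0 b) * deriv u0 b)) 0) (at s)"
    by (intro DERIV_diff primitive_param_has_derivative[OF d continuous_on_moment_integrand])
  moreover have "(\<lambda>b. deriv u0 b ^ k * (exp (s * deriv u0 b) * deriv u0 b))
                 = (\<lambda>b. deriv u0 b ^ Suc k * exp (s * deriv u0 b))"
    by (simp add: fun_eq_iff mult_ac)
  ultimately show ?thesis unfolding partial_moment_def integral_between_def by simp
qed

lemma partial_moment_periodic: "partial_moment u0 k (a+1) s = partial_moment u0 k a s + moment u0 k s"
proof -
  have "integral_between a (a+1) (\<lambda>b. deriv u0 b ^ k * exp (s * deriv u0 b)) = moment u0 k s"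
    unfolding moment_def
    by (rule integral_between_periodic) (auto intro!: continuous_intros simp: deriv_u0_periodic)
  then show ?thesis unfolding partial_moment_def
    using integral_between_add[of 0 a "\<lambda>b. deriv u0 b ^ k * exp (s * deriv u0 b)" "a+1"] by linarith
qed

lemma partial_moment_0_at_0: "partial_moment u0 0 a 0 = a"
proof -
  have "partial_moment u0 0 a 0 = a - 0" unfolding partial_moment_def
    by (rule integral_between_FTC) (auto intro!: derivative_eq_intros continuous_intros)
  then show ?thesis by simp
qed

lemma partial_moment_1_at_0: "partial_moment u0 1 a 0 = u0 a - u0 0"
  unfolding partial_moment_def
  by (rule integral_between_FTC) (auto intro!: continuous_intros has_derivative_u0)

lemma has_partials_exp_pos:
  "has_partials (\<lambda>a s. exp (s * deriv u0 a)) (\<lambda>a s. s * deriv (deriv u0) a * exp (s * deriv u0 a))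
     (\<lambda>a s. deriv u0 a * exp (s * deriv u0 a))"
  by (rule has_partialsI)
     (auto intro!: derivative_eq_intros has_derivative_deriv_u0 continuous_intros simp: mult_ac)

lemma has_partials_exp_neg:
  "has_partials (\<lambda>a s. exp (- (s * deriv u0 a)))
     (\<lambda>a s. -1 * (s * deriv (deriv u0) a * exp (- (s * deriv u0 a))))
     (\<lambda>a s. -1 * (deriv u0 a * exp (- (s * deriv u0 a))))"
  by (rule has_partialsI)
     (auto intro!: derivative_eq_intros has_derivative_deriv_u0 continuous_intros simp: mult_ac)

lemma has_partials_partial_moment:
  "has_partials (\<lambda>a s. partial_moment u0 k a s) (\<lambda>a s. deriv u0 a ^ k * exp (s * deriv u0 a))
     (\<lambda>a s. partial_moment u0 (Suc k) a s)"
  by (rule has_partialsI[OF partial_moment_has_derivative_fst _ partial_moment_has_derivative_snd])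
     (intro continuous_intros)

lemma has_partials_inverse_moment_0:
  "has_partials (\<lambda>a s. 1 / moment u0 0 s) (\<lambda>a s. 0)
     (\<lambda>a s. -1 * (moment u0 1 s * (1 / moment u0 0 s * (1 / moment u0 0 s))))"
proof (rule has_partials_snd_fun)
  fix s
  show "((\<lambda>s. 1 / moment u0 0 s) has_real_derivative
          -1 * (moment u0 1 s * (1 / moment u0 0 s * (1 / moment u0 0 s)))) (at s)"
    using moment_has_derivative[of 0 s] moment_0_pos[of s]
    by (auto intro!: derivative_eq_intros simp: power2_eq_square field_simps)
qed

lemma flow_algebra_has_partials:
  "G \<in> flow_algebra u0 \<Longrightarrow> \<exists>Ga\<in>flow_algebra u0. \<exists>Gt\<in>flow_algebra u0. has_partials G Ga Gt"
proof (induction rule: flow_algebra.induct)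
  case const then show ?case using has_partials_const flow_algebra.const by blast
next
  case time then show ?case using has_partials_snd flow_algebra.const by blast
next
  case (higher_deriv k) then show ?case
    using has_partials_fst_fun[OF higher_deriv_has_derivative] flow_algebra.higher_deriv flow_algebra.const
    by blast
next
  case exp_pos then show ?case
    using has_partials_exp_pos flow_algebra.mult[OF flow_algebra.mult[OF flow_algebra.time flow_algebra_deriv2]
        flow_algebra.exp_pos] flow_algebra.mult[OF flow_algebra_deriv flow_algebra.exp_pos]
    by blast
next
  case exp_neg then show ?case
    using has_partials_exp_neg flow_algebra.mult[OF flow_algebra.const
        flow_algebra.mult[OF flow_algebra.mult[OF flow_algebra.time flow_algebra_deriv2] flow_algebra.exp_neg]]
      flow_algebra.mult[OF flow_algebra.const flow_algebra.mult[OF flow_algebra_deriv flow_algebra.exp_neg]]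
    by blast
next
  case (partial_moment k) then show ?case
    using has_partials_partial_moment[of k] flow_algebra.mult[OF flow_algebra_power_deriv flow_algebra.exp_pos]
      flow_algebra.partial_moment by blast
next
  case (moment k) then show ?case
    using has_partials_snd_fun[OF moment_has_derivative] flow_algebra.const flow_algebra.moment by blast
next
  case inverse_moment_0 then show ?case
    using has_partials_inverse_moment_0 flow_algebra.const
      flow_algebra.mult[OF flow_algebra.const flow_algebra.mult[OF flow_algebra.moment
        flow_algebra.mult[OF flow_algebra.inverse_moment_0 flow_algebra.inverse_moment_0]]]
    by blast
next
  case (add G H)
  then obtain Ga Gt Ha Ht where "Ga \<in> flow_algebra u0" "Gt \<in> flow_algebra u0" "has_partials G Ga Gt"
    "Ha \<in> flow_algebra u0" "Ht \<in> flow_algebra u0" "has_partials H Ha Ht"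
    by blast
  then show ?case using has_partials_add flow_algebra.add by blast
next
  case (mult G H)
  then obtain Ga Gt Ha Ht where "Ga \<in> flow_algebra u0" "Gt \<in> flow_algebra u0" "has_partials G Ga Gt"
    "Ha \<in> flow_algebra u0" "Ht \<in> flow_algebra u0" "has_partials H Ha Ht"
    by blast
  then show ?case
    using has_partials_mult[of G Ga Gt H Ha Ht] flow_algebra.add flow_algebra.mult mult.hyps by blast
qed

end

lemma continuous_on_inverse_in_fst:
  fixes F \<phi> :: "real \<Rightarrow> real \<Rightarrow> real"
  assumes mono: "\<And>a b s. a < b \<Longrightarrow> F a s < F b s"
    and cont: "\<And>a. isCont (F a) s0"
    and inv: "\<And>x s. F (\<phi> x s) s = x"
  shows "isCont (\<lambda>p. \<phi> (fst p) (snd p)) (x0, s0)"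
  unfolding continuous_at_eps_delta
proof (intro allI impI)
  fix e :: real assume e: "e > 0"
  define a0 where "a0 = \<phi> x0 s0"
  have mono_iff: "F a s \<le> F b s \<longleftrightarrow> a \<le> b" for a b s
    using mono[of a b s] mono[of b a s] by (cases a b rule: linorder_cases) auto
  text \<open>\<open>x\<^sub>0\<close> lies strictly between \<open>F(a\<^sub>0 \<plusminus> e, s\<^sub>0)\<close>; by continuity in \<open>s\<close> this persists
    near \<open>(x\<^sub>0,s\<^sub>0)\<close>, and then \<open>\<phi>(x,s)\<close> lies strictly between \<open>a\<^sub>0 \<plusminus> e\<close>.\<close>
  have gp: "x0 < F (a0+e) s0" and gm: "F (a0-e) s0 < x0"
    using mono[of a0 "a0+e" s0] mono[of "a0-e" a0 s0] inv[of x0 s0] e unfolding a0_def by auto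
  define \<eta> where "\<eta> = min (F (a0+e) s0 - x0) (x0 - F (a0-e) s0) / 2"
  have \<eta>: "\<eta> > 0" unfolding \<eta>_def using gp gm by simp
  obtain d1 where d1: "d1 > 0" and hd1: "\<And>s. dist s s0 < d1 \<Longrightarrow> dist (F (a0+e) s) (F (a0+e) s0) < \<eta>"
    using cont[of "a0+e", unfolded continuous_at_eps_delta] \<eta> by blast
  obtain d2 where d2: "d2 > 0" and hd2: "\<And>s. dist s s0 < d2 \<Longrightarrow> dist (F (a0-e) s) (F (a0-e) s0) < \<eta>"
    using cont[of "a0-e", unfolded continuous_at_eps_delta] \<eta> by blast
  show "\<exists>d>0. \<forall>p. dist p (x0, s0) < d \<longrightarrow> dist (\<phi> (fst p) (snd p)) (\<phi> (fst (x0, s0)) (snd (x0, s0))) < e"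
  proof (intro exI[of _ "min \<eta> (min d1 d2)"] conjI allI impI)
    show "min \<eta> (min d1 d2) > 0" using \<eta> d1 d2 by simp
    fix p :: "real \<times> real" assume dp: "dist p (x0, s0) < min \<eta> (min d1 d2)"
    obtain y s where p: "p = (y,s)" by (cases p)
    have "dist y x0 < min \<eta> (min d1 d2)" "dist s s0 < min \<eta> (min d1 d2)"
      using dist_fst_le[of p "(x0,s0)"] dist_snd_le[of p "(x0,s0)"] dp p by auto
    then have "\<bar>F (a0+e) s - F (a0+e) s0\<bar> < \<eta>" "\<bar>F (a0-e) s - F (a0-e) s0\<bar> < \<eta>" "\<bar>y - x0\<bar> < \<eta>"
      using hd1[of s] hd2[of s] unfolding dist_real_def by auto
    moreover have "2 * \<eta> \<le> F (a0+e) s0 - x0" "2 * \<eta> \<le> x0 - F (a0-e) s0" unfolding \<eta>_def by auto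
    ultimately have "F (\<phi> y s) s < F (a0+e) s" "F (a0-e) s < F (\<phi> y s) s"
      unfolding inv abs_less_iff by linarith+
    then have "\<phi> y s < a0 + e" "a0 - e < \<phi> y s"
      using mono_iff[of "a0+e" s "\<phi> y s"] mono_iff[of "\<phi> y s" s "a0-e"] by auto
    then show "dist (\<phi> (fst p) (snd p)) (\<phi> (fst (x0, s0)) (snd (x0, s0))) < e"
      using p unfolding a0_def dist_real_def by auto
  qed
qed

text \<open>Integrating the formula for \<open>\<gamma>\<^sub>\<alpha>\<close>, with the characteristic through \<open>0\<close> moving
  at the constant speed \<open>u\<^sub>0(0)\<close>, gives the explicit flow map
  \<open>\<Gamma>(\<alpha>,t) = t u\<^sub>0(0) + (\<integral>\<^sub>0\<^sup>\<alpha> exp (t u\<^sub>0')) / Z(t)\<close>.\<close>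

definition flow_map :: "(real \<Rightarrow> real) \<Rightarrow> real \<Rightarrow> real \<Rightarrow> real" where
  "flow_map u0 a s = s * u0 0 + partial_moment u0 0 a s * (1 / moment u0 0 s)"

definition flow_map_da :: "(real \<Rightarrow> real) \<Rightarrow> real \<Rightarrow> real \<Rightarrow> real" where
  "flow_map_da u0 a s = exp (s * deriv u0 a) * (1 / moment u0 0 s)"

definition flow_map_dt :: "(real \<Rightarrow> real) \<Rightarrow> real \<Rightarrow> real \<Rightarrow> real" where
  "flow_map_dt u0 a s =
     u0 0 + partial_moment u0 1 a s / moment u0 0 s - partial_moment u0 0 a s * moment u0 1 s / (moment u0 0 s)^2"

definition inverse_flow_map_da :: "(real \<Rightarrow> real) \<Rightarrow> real \<Rightarrow> real \<Rightarrow> real" where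
  "inverse_flow_map_da u0 a s = moment u0 0 s * exp (- (s * deriv u0 a))"

definition flow_map_inv :: "(real \<Rightarrow> real) \<Rightarrow> real \<Rightarrow> real \<Rightarrow> real" where
  "flow_map_inv u0 x s = (THE a. flow_map u0 a s = x)"

context periodic_initial_data
begin

lemma has_partials_flow_map: "has_partials (flow_map u0) (flow_map_da u0) (flow_map_dt u0)"
proof -
  have "has_partials (\<lambda>a s. s * u0 0 + partial_moment u0 0 a s * (1 / moment u0 0 s))
      (\<lambda>a s. 0 * u0 0 + s * 0 + ((deriv u0 a ^ 0 * exp (s * deriv u0 a)) * (1 / moment u0 0 s)
             + partial_moment u0 0 a s * 0))
      (\<lambda>a s. 1 * u0 0 + s * 0 + (partial_moment u0 (Suc 0) a s * (1 / moment u0 0 s)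
             + partial_moment u0 0 a s * (-1 * (moment u0 1 s * (1 / moment u0 0 s * (1 / moment u0 0 s))))))"
    by (intro has_partials_add has_partials_mult has_partials_snd has_partials_const
              has_partials_partial_moment has_partials_inverse_moment_0)
  moreover have "(\<lambda>a s. s * u0 0 + partial_moment u0 0 a s * (1 / moment u0 0 s)) = flow_map u0"
    by (simp add: fun_eq_iff flow_map_def)
  moreover have "(\<lambda>a s. 0 * u0 0 + s * 0 + ((deriv u0 a ^ 0 * exp (s * deriv u0 a)) * (1 / moment u0 0 s)
             + partial_moment u0 0 a s * 0)) = flow_map_da u0"
    by (simp add: fun_eq_iff flow_map_da_def)
  moreover have "(\<lambda>a s. 1 * u0 0 + s * 0 + (partial_moment u0 (Suc 0) a s * (1 / moment u0 0 s)
             + partial_moment u0 0 a s * (-1 * (moment u0 1 s * (1 / moment u0 0 s * (1 / moment u0 0 s))))))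
      = flow_map_dt u0"
    by (simp add: fun_eq_iff flow_map_dt_def field_simps power2_eq_square)
  ultimately show ?thesis by simp
qed

lemma flow_map_dt_in_flow_algebra: "flow_map_dt u0 \<in> flow_algebra u0"
proof -
  have "(\<lambda>a s. u0 0 + (partial_moment u0 1 a s * (1 / moment u0 0 s) + -1 * ((partial_moment u0 0 a s
      * moment u0 1 s) * (1 / moment u0 0 s * (1 / moment u0 0 s))))) \<in> flow_algebra u0"
    by (intro flow_algebra.intros)
  moreover have "(\<lambda>a s. u0 0 + (partial_moment u0 1 a s * (1 / moment u0 0 s) + -1 * ((partial_moment u0 0 a s
      * moment u0 1 s) * (1 / moment u0 0 s * (1 / moment u0 0 s))))) = flow_map_dt u0"
    by (simp add: fun_eq_iff flow_map_dt_def field_simps power2_eq_square)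
  ultimately show ?thesis by simp
qed

lemma inverse_flow_map_da_in_flow_algebra: "inverse_flow_map_da u0 \<in> flow_algebra u0"
proof -
  have "(\<lambda>a s. moment u0 0 s * exp (- (s * deriv u0 a))) \<in> flow_algebra u0" by (intro flow_algebra.intros)
  then show ?thesis by (simp add: inverse_flow_map_da_def[abs_def])
qed

lemma inverse_flow_map_da: "inverse_flow_map_da u0 a s * flow_map_da u0 a s = 1"
  using moment_0_pos[of s] by (simp add: inverse_flow_map_da_def flow_map_da_def exp_minus field_simps)

lemma flow_map_has_derivative_fst: "((\<lambda>a. flow_map u0 a s) has_real_derivative flow_map_da u0 a s) (at a)"
  using has_partials_fst_deriv[OF has_partials_flow_map] .

lemma flow_map_da_pos: "0 < flow_map_da u0 a s"
  using moment_0_pos[of s] by (simp add: flow_map_da_def)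

lemma flow_map_strict_mono: "a < b \<Longrightarrow> flow_map u0 a s < flow_map u0 b s"
  by (rule DERIV_pos_imp_increasing[of a b "\<lambda>a. flow_map u0 a s"])
     (use flow_map_has_derivative_fst flow_map_da_pos in blast)+

lemma flow_map_periodic: "flow_map u0 (a+1) s = flow_map u0 a s + 1"
  unfolding flow_map_def partial_moment_periodic using moment_0_pos[of s] by (simp add: field_simps)

lemma flow_map_surj: "\<exists>a. flow_map u0 a s = x"
proof -
  have per: "flow_map u0 (a + of_int n) s = flow_map u0 a s + of_int n" for a n
    using periodic_of_int[of "\<lambda>a. flow_map u0 a s - a" a n] flow_map_periodic by simp
  define a0 where "a0 = (of_int \<lfloor>x - flow_map u0 0 s\<rfloor> :: real)"
  have g0: "flow_map u0 a0 s = flow_map u0 0 s + a0"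
    unfolding a0_def using per[of 0 "\<lfloor>x - flow_map u0 0 s\<rfloor>"] by simp
  have "flow_map u0 a0 s \<le> x"
    using g0 of_int_floor_le[of "x - flow_map u0 0 s"] unfolding a0_def by linarith
  moreover have "x \<le> flow_map u0 (a0 + 1) s"
    using g0 flow_map_periodic[of a0 s] frac_lt_1[of "x - flow_map u0 0 s"]
    unfolding a0_def frac_def by linarith
  ultimately show ?thesis
    using IVT[of "\<lambda>a. flow_map u0 a s" a0 x "a0 + 1"] DERIV_isCont[OF flow_map_has_derivative_fst] by auto
qed

lemma flow_map_flow_map_inv: "flow_map u0 (flow_map_inv u0 x s) s = x"
  unfolding flow_map_inv_def
  by (rule theI') (use flow_map_surj flow_map_strict_mono in \<open>metis linorder_neqE_linordered_idom order_less_irrefl\<close>)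

lemma flow_map_inv_flow_map: "flow_map_inv u0 (flow_map u0 a s) s = a"
  using flow_map_flow_map_inv[of "flow_map u0 a s" s] flow_map_strict_mono
  by (metis linorder_neqE_linordered_idom order_less_irrefl)

lemma flow_map_inv_periodic: "flow_map_inv u0 (x+1) s = flow_map_inv u0 x s + 1"
  using flow_map_inv_flow_map[of "flow_map_inv u0 x s + 1" s] flow_map_periodic flow_map_flow_map_inv by simp

lemma flow_map_at_0: "flow_map u0 a 0 = a"
  by (simp add: flow_map_def moment_0_at_0 partial_moment_0_at_0)

lemma flow_map_inv_at_0: "flow_map_inv u0 x 0 = x"
  using flow_map_inv_flow_map[of x 0] by (simp add: flow_map_at_0)

lemma continuous_on_flow_map_inv: "continuous_on UNIV (\<lambda>p. flow_map_inv u0 (fst p) (snd p))"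
proof (intro continuous_at_imp_continuous_on ballI)
  fix p :: "real \<times> real"
  have "isCont (flow_map u0 a) s" for a s
  proof -
    have "continuous_on UNIV ((\<lambda>p. flow_map u0 (fst p) (snd p)) \<circ> (\<lambda>s. (a, s)))"
      by (intro continuous_on_compose continuous_intros)
         (auto intro: continuous_on_subset[OF has_partials_continuous[OF has_partials_flow_map]])
    then show ?thesis by (simp add: o_def continuous_on_eq_continuous_at)
  qed
  then show "isCont (\<lambda>p. flow_map_inv u0 (fst p) (snd p)) p"
    using continuous_on_inverse_in_fst[of "flow_map u0" _ "flow_map_inv u0", OF flow_map_strict_mono _
        flow_map_flow_map_inv] by (cases p) auto
qed

lemma flow_map_inv_pair_has_derivative:
  "((\<lambda>p. (flow_map_inv u0 (fst p) (snd p), snd p)) has_derivative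
     (\<lambda>h. (inverse_flow_map_da u0 (flow_map_inv u0 x t) t * (fst h - flow_map_dt u0 (flow_map_inv u0 x t) t * snd h),
           snd h))) (at (x,t))"
proof -
  define a where "a = flow_map_inv u0 x t"
  define f where "f q = (flow_map u0 (fst q) (snd q), snd q)" for q :: "real \<times> real"
  define g where "g p = (flow_map_inv u0 (fst p) (snd p), snd p)" for p :: "real \<times> real"
  define f' where "f' h = (flow_map_da u0 a t * fst h + flow_map_dt u0 a t * snd h, snd h)" for h :: "real \<times> real"
  define g' where "g' h = (inverse_flow_map_da u0 a t * (fst h - flow_map_dt u0 a t * snd h), snd h)"
    for h :: "real \<times> real"
  have fd: "(f has_derivative f') (at (a,t))"
    unfolding f_def f'_def using has_partials_flow_map unfolding has_partials_def
    by (intro has_derivative_Pair) (auto intro!: has_derivative_snd has_derivative_ident)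
  have "(g has_derivative g') (at (f (a,t)))"
  proof (rule has_derivative_inverse_basic_x[OF fd, of g' g UNIV])
    show "bounded_linear g'" unfolding g'_def by (intro bounded_linear_intros)
    show "g' \<circ> f' = id"
      using inverse_flow_map_da[of a t] by (auto simp: g'_def f'_def fun_eq_iff algebra_simps)
    have "continuous_on UNIV g"
      unfolding g_def by (intro continuous_on_Pair continuous_on_flow_map_inv continuous_intros)
    then show "continuous (at (f (a, t))) g" using continuous_on_interior by fastforce
    show "g (f (a, t)) = (a, t)" by (simp add: f_def g_def flow_map_inv_flow_map)
    show "\<And>y. y \<in> UNIV \<Longrightarrow> f (g y) = y" by (simp add: f_def g_def flow_map_flow_map_inv)
  qed auto
  moreover have "f (a,t) = (x,t)" by (simp add: f_def a_def flow_map_flow_map_inv)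
  ultimately show ?thesis unfolding g_def[abs_def] g'_def a_def by simp
qed

lemma has_derivative_comp_flow_map_inv:
  assumes "has_partials G Ga Gt"
  shows "((\<lambda>p. G (flow_map_inv u0 (fst p) (snd p)) (snd p)) has_derivative
     (\<lambda>h. Ga (flow_map_inv u0 x t) t * (inverse_flow_map_da u0 (flow_map_inv u0 x t) t
            * (fst h - flow_map_dt u0 (flow_map_inv u0 x t) t * snd h)) + Gt (flow_map_inv u0 x t) t * snd h))
     (at (x,t))"
proof -
  have "((\<lambda>q. G (fst q) (snd q)) has_derivative
          (\<lambda>q. Ga (flow_map_inv u0 x t) t * fst q + Gt (flow_map_inv u0 x t) t * snd q))
      (at ((\<lambda>p. (flow_map_inv u0 (fst p) (snd p), snd p)) (x,t)))"
    using assms unfolding has_partials_def by simp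
  from has_derivative_compose[OF flow_map_inv_pair_has_derivative this] show ?thesis by simp
qed

lemma comp_flow_map_inv_has_derivative_x:
  assumes "has_partials G Ga Gt"
  shows "((\<lambda>y. G (flow_map_inv u0 y t) t) has_real_derivative
           Ga (flow_map_inv u0 x t) t * inverse_flow_map_da u0 (flow_map_inv u0 x t) t) (at x)"
proof -
  have "((\<lambda>y. (y, t)) has_derivative (\<lambda>h. (h, 0))) (at x)"
    by (intro has_derivative_Pair has_derivative_ident has_derivative_const)
  from has_derivative_compose[OF this has_derivative_comp_flow_map_inv[OF assms]] show ?thesis
    unfolding has_field_derivative_def by (simp add: has_derivative_eq_rhs fun_eq_iff algebra_simps)
qed

lemma comp_flow_map_inv_has_derivative_t:
  assumes "has_partials G Ga Gt"
  shows "((\<lambda>s. G (flow_map_inv u0 x s) s) has_real_derivative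
           Gt (flow_map_inv u0 x t) t - Ga (flow_map_inv u0 x t) t * inverse_flow_map_da u0 (flow_map_inv u0 x t) t
              * flow_map_dt u0 (flow_map_inv u0 x t) t) (at t)"
proof -
  have "((\<lambda>s. (x, s)) has_derivative (\<lambda>h. (0, h))) (at t)"
    by (intro has_derivative_Pair has_derivative_ident has_derivative_const)
  from has_derivative_compose[OF this has_derivative_comp_flow_map_inv[OF assms]] show ?thesis
    unfolding has_field_derivative_def by (simp add: has_derivative_eq_rhs fun_eq_iff algebra_simps)
qed

lemma continuous_on_comp_flow_map_inv:
  assumes "has_partials G Ga Gt"
  shows "continuous_on UNIV (\<lambda>p. G (flow_map_inv u0 (fst p) (snd p)) (snd p))"
proof -
  have "continuous_on UNIV ((\<lambda>q. G (fst q) (snd q)) \<circ> (\<lambda>p. (flow_map_inv u0 (fst p) (snd p), snd p)))"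
    by (intro continuous_on_compose continuous_on_Pair continuous_on_flow_map_inv continuous_intros)
       (rule continuous_on_subset[OF has_partials_continuous[OF assms]], simp)
  then show ?thesis by (simp add: o_def)
qed

end

definition explicit_solution :: "(real \<Rightarrow> real) \<Rightarrow> real \<Rightarrow> real \<Rightarrow> real" where
  "explicit_solution u0 x t = flow_map_dt u0 (flow_map_inv u0 x t) t"

context periodic_initial_data
begin

lemma pd_explicit_solution_in_flow_algebra:
  "\<exists>G\<in>flow_algebra u0. \<forall>x t. 0 \<le> t \<longrightarrow> t < T \<longrightarrow> pd T ds (explicit_solution u0) x t = G (flow_map_inv u0 x t) t"
proof (induction ds)
  case Nil
  show ?case by (rule bexI[of _ "flow_map_dt u0"]) (auto simp: explicit_solution_def flow_map_dt_in_flow_algebra)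
next
  case (Cons b ds)
  then obtain G where G: "G \<in> flow_algebra u0"
    and hG: "\<And>x t. 0 \<le> t \<Longrightarrow> t < T \<Longrightarrow> pd T ds (explicit_solution u0) x t = G (flow_map_inv u0 x t) t"
    by blast
  obtain Ga Gt where Ga: "Ga \<in> flow_algebra u0" and Gt: "Gt \<in> flow_algebra u0" and HG: "has_partials G Ga Gt"
    using flow_algebra_has_partials[OF G] by blast
  show ?case
  proof (cases b)
    case True
    have "pdx (pd T ds (explicit_solution u0)) x t
            = Ga (flow_map_inv u0 x t) t * inverse_flow_map_da u0 (flow_map_inv u0 x t) t"
      if "0 \<le> t" "t < T" for x t
    proof -
      have "(\<lambda>y. pd T ds (explicit_solution u0) y t) = (\<lambda>y. G (flow_map_inv u0 y t) t)" using hG that by auto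
      then show ?thesis
        unfolding pdx_def by (simp add: DERIV_imp_deriv[OF comp_flow_map_inv_has_derivative_x[OF HG]])
    qed
    moreover have "(\<lambda>a s. Ga a s * inverse_flow_map_da u0 a s) \<in> flow_algebra u0"
      by (rule flow_algebra.mult[OF Ga inverse_flow_map_da_in_flow_algebra])
    ultimately show ?thesis using True by auto
  next
    case False
    have "pdt T (pd T ds (explicit_solution u0)) x t
            = Gt (flow_map_inv u0 x t) t - Ga (flow_map_inv u0 x t) t
                * inverse_flow_map_da u0 (flow_map_inv u0 x t) t * flow_map_dt u0 (flow_map_inv u0 x t) t"
      if "0 \<le> t" "t < T" for x t
    proof (rule pdt_eqI(2)[OF that])
      show "\<And>s. 0 \<le> s \<Longrightarrow> s < T \<Longrightarrow> pd T ds (explicit_solution u0) x s = G (flow_map_inv u0 x s) s"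
        by (rule hG)
    qed (rule comp_flow_map_inv_has_derivative_t[OF HG])
    moreover have "(\<lambda>a s. Gt a s - Ga a s * inverse_flow_map_da u0 a s * flow_map_dt u0 a s) \<in> flow_algebra u0"
      by (intro flow_algebra_diff flow_algebra.mult Ga Gt inverse_flow_map_da_in_flow_algebra
                flow_map_dt_in_flow_algebra)
    ultimately show ?thesis using False by auto
  qed
qed

lemma smooth_on_strip_explicit_solution: "smooth_on_strip T (explicit_solution u0)"
  unfolding smooth_on_strip_def
proof (intro allI conjI impI)
  fix ds
  obtain G where G: "G \<in> flow_algebra u0"
    and hG: "\<And>x t. 0 \<le> t \<Longrightarrow> t < T \<Longrightarrow> pd T ds (explicit_solution u0) x t = G (flow_map_inv u0 x t) t"
    using pd_explicit_solution_in_flow_algebra by blast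
  obtain Ga Gt where HG: "has_partials G Ga Gt" using flow_algebra_has_partials[OF G] by blast
  have "continuous_on (UNIV \<times> {0..<T}) (\<lambda>p. G (flow_map_inv u0 (fst p) (snd p)) (snd p))"
    by (rule continuous_on_subset[OF continuous_on_comp_flow_map_inv[OF HG]]) simp
  then show "continuous_on (UNIV \<times> {0..<T}) (\<lambda>p. pd T ds (explicit_solution u0) (fst p) (snd p))"
    by (rule continuous_on_eq) (auto simp: hG)
  fix x t :: real assume t: "0 \<le> t \<and> t < T"
  have "(\<lambda>y. pd T ds (explicit_solution u0) y t) = (\<lambda>y. G (flow_map_inv u0 y t) t)" using hG t by auto
  then show "(\<lambda>y. pd T ds (explicit_solution u0) y t) differentiable at x"
    using comp_flow_map_inv_has_derivative_x[OF HG, of t x] by (auto simp: real_differentiable_def)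
  show "(\<lambda>s. pd T ds (explicit_solution u0) x s) differentiable at t within {0..<T}"
    using pdt_eqI(1)[of t T "pd T ds (explicit_solution u0)" x, OF _ _ hG
        comp_flow_map_inv_has_derivative_t[OF HG]] t
    by (auto simp: real_differentiable_def)
qed

lemma explicit_solution_at_0: "explicit_solution u0 x 0 = u0 x"
  using moment_1_at_0 partial_moment_1_at_0[of x]
  by (simp add: explicit_solution_def flow_map_inv_at_0 flow_map_dt_def moment_0_at_0
                partial_moment_0_at_0)

lemma explicit_solution_periodic: "explicit_solution u0 (x + 1) t = explicit_solution u0 x t"
proof -
  have "flow_map_dt u0 (a + 1) t = flow_map_dt u0 a t" for a
    unfolding flow_map_dt_def partial_moment_periodic
    using moment_0_pos[of t] by (simp add: field_simps power2_eq_square)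
  then show ?thesis by (simp add: explicit_solution_def flow_map_inv_periodic)
qed

lemma flow_map_dt_has_derivative_fst:
  "((\<lambda>a. flow_map_dt u0 a s) has_real_derivative
      (deriv u0 a - moment u0 1 s / moment u0 0 s) * flow_map_da u0 a s) (at a)"
  unfolding flow_map_dt_def
  using partial_moment_has_derivative_fst[of 1 s a] partial_moment_has_derivative_fst[of 0 s a] moment_0_pos[of s]
  by (auto intro!: derivative_eq_intros simp: flow_map_da_def field_simps power2_eq_square)

lemma flow_map_inv_has_derivative_x:
  "((\<lambda>y. flow_map_inv u0 y t) has_real_derivative inverse_flow_map_da u0 (flow_map_inv u0 y t) t) (at y)"
  using comp_flow_map_inv_has_derivative_x[OF has_partials_fst_fun[OF DERIV_ident], of t y] by simp

lemma pdx_explicit_solution: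
  "pdx (explicit_solution u0) = (\<lambda>x t. deriv u0 (flow_map_inv u0 x t) - moment u0 1 t / moment u0 0 t)"
proof (intro ext)
  fix x t
  have "((\<lambda>y. explicit_solution u0 y t) has_real_derivative
          (deriv u0 (flow_map_inv u0 x t) - moment u0 1 t / moment u0 0 t)
          * flow_map_da u0 (flow_map_inv u0 x t) t * inverse_flow_map_da u0 (flow_map_inv u0 x t) t) (at x)"
    unfolding explicit_solution_def
    by (rule DERIV_chain2[OF flow_map_dt_has_derivative_fst flow_map_inv_has_derivative_x])
  then show "pdx (explicit_solution u0) x t = deriv u0 (flow_map_inv u0 x t) - moment u0 1 t / moment u0 0 t"
    unfolding pdx_def using inverse_flow_map_da by (simp add: DERIV_imp_deriv mult.assoc mult.commute)
qed

lemma has_partials_slope: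
  "has_partials (\<lambda>a s. deriv u0 a - moment u0 1 s / moment u0 0 s) (\<lambda>a s. deriv (deriv u0) a)
     (\<lambda>a s. - (moment u0 2 s / moment u0 0 s - (moment u0 1 s / moment u0 0 s)^2))"
proof (rule has_partialsI)
  fix a s :: real
  show "((\<lambda>a. deriv u0 a - moment u0 1 s / moment u0 0 s) has_real_derivative deriv (deriv u0) a) (at a)"
    using has_derivative_deriv_u0[of a] by (auto intro!: derivative_eq_intros)
  show "((\<lambda>s. deriv u0 a - moment u0 1 s / moment u0 0 s) has_real_derivative
      - (moment u0 2 s / moment u0 0 s - (moment u0 1 s / moment u0 0 s)^2)) (at s)"
    using moment_has_derivative[of 1 s] moment_has_derivative[of 0 s] moment_0_pos[of s]
    by (auto intro!: derivative_eq_intros simp: numeral_2_eq_2 power2_eq_square field_simps)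
qed (intro continuous_intros)

lemma pdxx_explicit_solution:
  "pdx (pdx (explicit_solution u0)) x t
     = deriv (deriv u0) (flow_map_inv u0 x t) * inverse_flow_map_da u0 (flow_map_inv u0 x t) t"
  unfolding pdx_explicit_solution pdx_def
  by (rule DERIV_imp_deriv[OF comp_flow_map_inv_has_derivative_x[OF has_partials_slope]])

lemma pdtx_explicit_solution:
  assumes "0 \<le> t" "t < T"
  shows "pdt T (pdx (explicit_solution u0)) x t
           = - (moment u0 2 t / moment u0 0 t - (moment u0 1 t / moment u0 0 t)^2)
             - deriv (deriv u0) (flow_map_inv u0 x t) * inverse_flow_map_da u0 (flow_map_inv u0 x t) t
                 * flow_map_dt u0 (flow_map_inv u0 x t) t"
  unfolding pdx_explicit_solution
  by (rule pdt_eqI(2)[OF assms _ comp_flow_map_inv_has_derivative_t[OF has_partials_slope]]) simp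

lemma integral_comp_flow_map_inv:
  assumes f: "continuous_on UNIV f" and per: "\<And>a. f (a+1) = f a"
  shows "integral {0..1} (\<lambda>y. f (flow_map_inv u0 y t)) = integral {0..1} (\<lambda>a. f a * flow_map_da u0 a t)"
proof -
  define h where "h a = f a * flow_map_da u0 a t" for a
  have hc: "continuous_on UNIV h"
    unfolding h_def flow_map_da_def by (intro continuous_intros f)
  have hper: "h (a+1) = h a" for a by (simp add: h_def per flow_map_da_def deriv_u0_periodic)
  define A where "A a = integral_between 0 a h" for a
  have "((\<lambda>y. A (flow_map_inv u0 y t)) has_real_derivative f (flow_map_inv u0 y t)) (at y)" for y
  proof -
    have "((\<lambda>y. A (flow_map_inv u0 y t)) has_real_derivative
            h (flow_map_inv u0 y t) * inverse_flow_map_da u0 (flow_map_inv u0 y t) t) (at y)"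
      unfolding A_def by (rule DERIV_chain2[OF integral_between_has_derivative[OF hc] flow_map_inv_has_derivative_x])
    moreover have "h (flow_map_inv u0 y t) * inverse_flow_map_da u0 (flow_map_inv u0 y t) t
        = f (flow_map_inv u0 y t) * (inverse_flow_map_da u0 (flow_map_inv u0 y t) t
            * flow_map_da u0 (flow_map_inv u0 y t) t)"
      unfolding h_def by (simp only: ac_simps)
    ultimately show ?thesis using inverse_flow_map_da by simp
  qed
  then have "((\<lambda>y. f (flow_map_inv u0 y t)) has_integral
               A (flow_map_inv u0 1 t) - A (flow_map_inv u0 0 t)) {0..1}"
    by (intro fundamental_theorem_of_calculus)
       (auto simp: has_real_derivative_iff_has_vector_derivative[symmetric] intro: has_field_derivative_at_within)
  moreover have "A (flow_map_inv u0 1 t) - A (flow_map_inv u0 0 t) = integral {0..1} h"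
    using flow_map_inv_periodic[of 0 t] integral_between_add[of 0 "flow_map_inv u0 0 t" h "flow_map_inv u0 0 t + 1"]
      integral_between_periodic[OF hc hper, of "flow_map_inv u0 0 t"] unfolding A_def by simp
  ultimately show ?thesis unfolding h_def by (simp add: integral_unique)
qed

text \<open>The right-hand side of the equation is minus the variance of \<open>u\<^sub>0'\<close> for the
  probability density \<open>exp (t u\<^sub>0')/Z\<close>.\<close>

lemma integral_pdx_explicit_solution_squared:
  "integral {0..1} (\<lambda>y. (pdx (explicit_solution u0) y t)^2)
     = moment u0 2 t / moment u0 0 t - (moment u0 1 t / moment u0 0 t)^2"
proof -
  define \<rho> where "\<rho> = moment u0 1 t / moment u0 0 t"
  have Z: "0 < moment u0 0 t" by (rule moment_0_pos)
  have "integral {0..1} (\<lambda>y. (pdx (explicit_solution u0) y t)^2)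
      = integral {0..1} (\<lambda>a. (deriv u0 a - \<rho>)^2 * flow_map_da u0 a t)"
    unfolding pdx_explicit_solution \<rho>_def
    by (rule integral_comp_flow_map_inv[of "\<lambda>a. (deriv u0 a - \<rho>)^2", unfolded \<rho>_def])
       (auto intro!: continuous_intros simp: deriv_u0_periodic)
  also have "\<dots> = (moment u0 2 t - 2 * \<rho> * moment u0 1 t + \<rho>^2 * moment u0 0 t) / moment u0 0 t"
  proof (rule integral_unique)
    have "((\<lambda>b. (deriv u0 b ^ 2 * exp (t * deriv u0 b)) - 2 * \<rho> * (deriv u0 b ^ 1 * exp (t * deriv u0 b))
               + \<rho>^2 * (deriv u0 b ^ 0 * exp (t * deriv u0 b))) has_integral
          (moment u0 2 t - 2 * \<rho> * moment u0 1 t + \<rho>^2 * moment u0 0 t)) {0..1}"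
      by (intro has_integral_add has_integral_diff has_integral_mult_right has_integral_moment)
    from has_integral_mult_right[OF this, of "1 / moment u0 0 t"]
    have "((\<lambda>b. 1 / moment u0 0 t * ((deriv u0 b ^ 2 * exp (t * deriv u0 b))
              - 2 * \<rho> * (deriv u0 b ^ 1 * exp (t * deriv u0 b)) + \<rho>^2 * (deriv u0 b ^ 0 * exp (t * deriv u0 b))))
          has_integral (moment u0 2 t - 2 * \<rho> * moment u0 1 t + \<rho>^2 * moment u0 0 t) / moment u0 0 t) {0..1}"
      by simp
    moreover have "(\<lambda>b. 1 / moment u0 0 t * ((deriv u0 b ^ 2 * exp (t * deriv u0 b))
              - 2 * \<rho> * (deriv u0 b ^ 1 * exp (t * deriv u0 b)) + \<rho>^2 * (deriv u0 b ^ 0 * exp (t * deriv u0 b))))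
        = (\<lambda>a. (deriv u0 a - \<rho>)^2 * flow_map_da u0 a t)"
      using Z by (simp add: fun_eq_iff flow_map_da_def power2_eq_square field_simps)
    ultimately show "((\<lambda>a. (deriv u0 a - \<rho>)^2 * flow_map_da u0 a t) has_integral
          (moment u0 2 t - 2 * \<rho> * moment u0 1 t + \<rho>^2 * moment u0 0 t) / moment u0 0 t) {0..1}"
      by simp
  qed
  also have "\<dots> = moment u0 2 t / moment u0 0 t - (moment u0 1 t / moment u0 0 t)^2"
    using Z unfolding \<rho>_def by (simp add: power2_eq_square field_simps)
  finally show ?thesis .
qed

theorem explicit_solution_is_solution: "is_solution u0 T (explicit_solution u0)"
  unfolding is_solution_def
proof (intro conjI allI impI)
  fix x t :: real assume t: "0 \<le> t \<and> t < T"
  have "pd T [False, True] (explicit_solution u0) x t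
          + explicit_solution u0 x t * pd T [True, True] (explicit_solution u0) x t
      = - (moment u0 2 t / moment u0 0 t - (moment u0 1 t / moment u0 0 t)^2)"
    using t by (simp add: pdtx_explicit_solution pdxx_explicit_solution explicit_solution_def algebra_simps)
  then show "pd T [False, True] (explicit_solution u0) x t
          + explicit_solution u0 x t * pd T [True, True] (explicit_solution u0) x t
      = - integral {0..1} (\<lambda>y. (pd T [True] (explicit_solution u0) y t)\<^sup>2)"
    using integral_pdx_explicit_solution_squared[of t] by simp
qed (simp_all add: smooth_on_strip_explicit_solution explicit_solution_at_0 explicit_solution_periodic)

end

context periodic_initial_data
begin

lemma formulas_along_characteristics:
  assumes "is_solution u0 T u" "is_characteristic T u \<gamma>" "0 \<le> t" "t < T"
  shows "((\<lambda>a. \<gamma> a t) has_real_derivative exp (t * deriv u0 \<alpha>) / moment u0 0 t) (at \<alpha>)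
       \<and> pd T [True] u (\<gamma> \<alpha> t) t = deriv u0 \<alpha> - moment u0 1 t / moment u0 0 t
       \<and> 0 \<le> deriv u0 \<alpha> - pd T [True] u (\<gamma> \<alpha> t) t
       \<and> deriv u0 \<alpha> - pd T [True] u (\<gamma> \<alpha> t) t \<le> moment u0 1 t"
proof -
  interpret characteristic_flow u0 T "(t + T) / 2" u \<gamma> using assms by unfold_locales auto
  show ?thesis using characteristic_formulas[of t \<alpha>] assms by simp
qed

lemma moment_0_eq: "moment u0 0 t = integral {0..1} (\<lambda>\<beta>. exp (t * deriv u0 \<beta>))"
  and moment_1_eq: "moment u0 1 t = integral {0..1} (\<lambda>\<beta>. deriv u0 \<beta> * exp (t * deriv u0 \<beta>))"
  by (simp_all add: moment_def)

end

theorem mainTheorem9: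
  fixes u0 :: "real \<Rightarrow> real"
  assumes "smooth1 u0"
    and "\<forall>x. u0 (x + 1) = u0 x"
  shows "(\<forall>T > 0. \<forall>u \<gamma>. is_solution u0 T u \<and> is_characteristic T u \<gamma> \<longrightarrow>
           (\<forall>\<alpha> t. 0 \<le> t \<and> t < T \<longrightarrow>
              ((\<lambda>a. \<gamma> a t) has_real_derivative
                  exp (t * deriv u0 \<alpha>) / integral {0..1} (\<lambda>\<beta>. exp (t * deriv u0 \<beta>))) (at \<alpha>)
            \<and> pd T [True] u (\<gamma> \<alpha> t) t
                = deriv u0 \<alpha> - integral {0..1} (\<lambda>\<beta>. deriv u0 \<beta> * exp (t * deriv u0 \<beta>))
                                / integral {0..1} (\<lambda>\<beta>. exp (t * deriv u0 \<beta>))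
            \<and> 0 \<le> deriv u0 \<alpha> - pd T [True] u (\<gamma> \<alpha> t) t
            \<and> deriv u0 \<alpha> - pd T [True] u (\<gamma> \<alpha> t) t
                \<le> integral {0..1} (\<lambda>\<beta>. deriv u0 \<beta> * exp (t * deriv u0 \<beta>))))
       \<and> (\<exists>u. \<forall>T > 0. is_solution u0 T u)"
proof -
  interpret periodic_initial_data u0 using assms by unfold_locales auto
  show ?thesis
    unfolding moment_0_eq[symmetric] moment_1_eq[symmetric]
    using formulas_along_characteristics explicit_solution_is_solution by blast
qed
end
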